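(* Let $N_1$ and $N_2$ be phylogenetic networks on the same set $S$ of taxa. If $m(N_1,N_2)=0$ (equivalently, $\Upsilon(N_1)=\Upsilon(N_2)$), then $N_1$ and $N_2$ are indistinguishable, i.e. their reduced versions satisfy $R(N_1)\cong R(N_2)$.
   Context: A phylogenetic network on a finite set $S$ of taxa is a finite rooted directed acyclic graph (exactly one node without parents) whose leaves (nodes without children) are bijectively labeled by the elements of $S$. A tree node is a node with at most one parent; a hybrid node is a node with more than one parent. The height $h(v)$ of a node is the largest length of a directed path from $v$ to a leaf. The nested label $\ell(v)$ of a node $v$ is defined by induction on height: if $v$ is a leaf labeled $i$, $\ell(v)=\{i\}$; otherwise, if $v_1,\dots,v_k$ are the children of $v$, $\ell(v)$ is the multiset $\{\ell(v_1),\dots,\ell(v_k)\}$. $\Upsilon(N)$ is the multiset of nested labels of all nodes of $N$ (each nested label counted with multiplicity the number of nodes having it), and $m(N_1,N_2)=\frac12|\Upsilon(N_1)\bigtriangleup\Upsilon(N_2)|$, where for multisets $M_1,M_2$ the symmetric difference gives each element multiplicity $|M_1(x)-M_2(x)|$ and $|M|$ is the sum of multiplicities. The cluster of a node $u$ is the set of labels of leaves descending from $u$; two nodes are convergent when they have the same cluster. For a node $u$, $N(u)$ denotes the subgraph induced on the descendants of $u$; a clade of $N$ is a subgraph $N(u)$ all of whose nodes are tree nodes of $N$. The reduced version $R(N)$ is obtained as follows. If $N$ has no pair of distinct convergent nodes, $R(N)=N$. Otherwise: (0) for every maximal clade $T$ of $N$ with root $r_T$, insert a new node $h_T$ between $r_T$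 and its only parent, label $h_T$ by a symbol for $T$, and remove $r_T$ and its descendants, so $h_T$ becomes a "symbolic leaf"; call the result $N^*$ (its leaves are symbolic leaves and hybrid leaves of $N$). (1) Remove from $N^*$ all internal nodes that are convergent in $N$ with some other node, and all internal nodes of $N^*$ that are descendants of some removed node. (2) For every remaining node $x$ that was a parent of a node $v$ removed in (1), add an arc from $x$ to every (hybrid or symbolic) leaf that was a descendant of $v$ in $N^*$, if such an arc does not already exist. (3) For every symbolic leaf $h_T$, remove its label and append the clade $T$ to it via an arc $(h_T,r_T)$. (4) Replace every node with exactly one parent and one child by an arc from its parent to its child. Isomorphism $\cong$ of such leaf-labeled DAGs means a digraph isomorphism mapping each leaf to the leaf with the same label. Two networks are indistinguishable when $R(N_1)\cong R(N_2)$. *)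

theory Defs
  imports Complex_Main "HOL-Library.Multiset"
begin

text \<open>A (candidate) network: a node set, a set of arcs (u,v) meaning u is a parent of v,
  and a labelling of nodes (only relevant on leaves).\<close>

record ('v, 's) net =
  nodes :: "'v set"
  arcs  :: "('v \<times> 'v) set"
  label :: "'v \<Rightarrow> 's"

definition children :: "('v, 's) net \<Rightarrow> 'v \<Rightarrow> 'v set" where
  "children N v = {w. (v, w) \<in> arcs N}"

definition parents :: "('v, 's) net \<Rightarrow> 'v \<Rightarrow> 'v set" where
  "parents N v = {u. (u, v) \<in> arcs N}"

definition leaves :: "('v, 's) net \<Rightarrow> 'v set" where
  "leaves N = {v \<in> nodes N. children N v = {}}"

definition phylo_net :: "'s set \<Rightarrow> ('v, 's) net \<Rightarrow> bool" where
  "phylo_net S N \<longleftrightarrow>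
     finite (nodes N) \<and> arcs N \<subseteq> nodes N \<times> nodes N \<and> acyclic (arcs N) \<and>
     (\<exists>!r. r \<in> nodes N \<and> parents N r = {}) \<and>
     bij_betw (label N) (leaves N) S"

definition tree_node :: "('v, 's) net \<Rightarrow> 'v \<Rightarrow> bool" where
  "tree_node N v \<longleftrightarrow> v \<in> nodes N \<and> card (parents N v) \<le> 1"

definition hybrid_node :: "('v, 's) net \<Rightarrow> 'v \<Rightarrow> bool" where
  "hybrid_node N v \<longleftrightarrow> v \<in> nodes N \<and> card (parents N v) > 1"

definition desc :: "('v, 's) net \<Rightarrow> 'v \<Rightarrow> 'v set" where
  "desc N u = {w. (u, w) \<in> (arcs N)\<^sup>*}"

definition cluster :: "('v, 's) net \<Rightarrow> 'v \<Rightarrow> 's set" where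
  "cluster N u = label N ` (leaves N \<inter> desc N u)"

definition convergent :: "('v, 's) net \<Rightarrow> 'v \<Rightarrow> 'v \<Rightarrow> bool" where
  "convergent N u v \<longleftrightarrow> cluster N u = cluster N v"

datatype 's nlabel = NLeaf 's | NNode "'s nlabel multiset"

inductive has_nl :: "('v, 's) net \<Rightarrow> 'v \<Rightarrow> 's nlabel \<Rightarrow> bool" for N where
  leaf: "v \<in> leaves N \<Longrightarrow> has_nl N v (NLeaf (label N v))"
| node: "v \<in> nodes N \<Longrightarrow> children N v \<noteq> {} \<Longrightarrow>
         (\<And>c. c \<in> children N v \<Longrightarrow> has_nl N c (f c)) \<Longrightarrow>
         has_nl N v (NNode (image_mset f (mset_set (children N v))))"

definition nested_label :: "('v, 's) net \<Rightarrow> 'v \<Rightarrow> 's nlabel" where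
  "nested_label N v = (THE l. has_nl N v l)"

definition Upsilon :: "('v, 's) net \<Rightarrow> 's nlabel multiset" where
  "Upsilon N = image_mset (nested_label N) (mset_set (nodes N))"

text \<open>m(N1,N2) = |Upsilon N1 symmetric-difference Upsilon N2| / 2 (multiset symmetric
  difference: multiplicity |M1(x) - M2(x)|).\<close>
definition mdist :: "('v, 's) net \<Rightarrow> ('w, 's) net \<Rightarrow> real" where
  "mdist N1 N2 = real (size ((Upsilon N1 - Upsilon N2) + (Upsilon N2 - Upsilon N1))) / 2"

definition clade_root :: "('v, 's) net \<Rightarrow> 'v \<Rightarrow> bool" where
  "clade_root N u \<longleftrightarrow> u \<in> nodes N \<and> (\<forall>w \<in> desc N u. tree_node N w)"

definition max_clade_root :: "('v, 's) net \<Rightarrow> 'v \<Rightarrow> bool" where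
  "max_clade_root N r \<longleftrightarrow> clade_root N r \<and>
     \<not> (\<exists>r'. clade_root N r' \<and> r' \<noteq> r \<and> r \<in> desc N r')"

definition in_clade :: "('v, 's) net \<Rightarrow> 'v \<Rightarrow> bool" where
  "in_clade N v \<longleftrightarrow> (\<exists>r. clade_root N r \<and> v \<in> desc N r)"

text \<open>Step (0): the graph N*. Node Inl v is the original node v (not in any clade),
  node Inr r is the symbolic leaf h_T of the maximal clade T rooted at r.\<close>
definition star_nodes :: "('v, 's) net \<Rightarrow> ('v + 'v) set" where
  "star_nodes N = Inl ` {v \<in> nodes N. \<not> in_clade N v} \<union> Inr ` {r. max_clade_root N r}"

definition star_arcs :: "('v, 's) net \<Rightarrow> (('v + 'v) \<times> ('v + 'v)) set" where
  "star_arcs N =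
     {(Inl u, Inl v) | u v. (u, v) \<in> arcs N \<and> \<not> in_clade N u \<and> \<not> in_clade N v} \<union>
     {(Inl p, Inr r) | p r. (p, r) \<in> arcs N \<and> max_clade_root N r}"

definition star_internal :: "('v, 's) net \<Rightarrow> ('v + 'v) set" where
  "star_internal N = {x \<in> star_nodes N. \<exists>y. (x, y) \<in> star_arcs N}"

definition star_leaves :: "('v, 's) net \<Rightarrow> ('v + 'v) set" where
  "star_leaves N = {x \<in> star_nodes N. \<forall>y. (x, y) \<notin> star_arcs N}"

definition removed0 :: "('v, 's) net \<Rightarrow> ('v + 'v) set" where
  "removed0 N = {x \<in> star_internal N. \<exists>v w. x = Inl v \<and> w \<in> nodes N \<and> w \<noteq> v \<and> convergent N v w}"

definition removed :: "('v, 's) net \<Rightarrow> ('v + 'v) set" where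
  "removed N = removed0 N \<union>
     {x \<in> star_internal N. \<exists>d \<in> removed0 N. (d, x) \<in> (star_arcs N)\<^sup>+}"

definition step3_nodes :: "('v, 's) net \<Rightarrow> ('v + 'v) set" where
  "step3_nodes N = (star_nodes N - removed N) \<union> Inl ` {v \<in> nodes N. in_clade N v}"

definition step3_arcs :: "('v, 's) net \<Rightarrow> (('v + 'v) \<times> ('v + 'v)) set" where
  "step3_arcs N =
     {(x, y) \<in> star_arcs N. x \<notin> removed N \<and> y \<notin> removed N} \<union>
     {(x, l) | x v l. x \<in> star_nodes N - removed N \<and> v \<in> removed N \<and>
                      (x, v) \<in> star_arcs N \<and> l \<in> star_leaves N \<and> (v, l) \<in> (star_arcs N)\<^sup>*} \<union>
     {(Inr r, Inl r) | r. max_clade_root N r} \<union>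
     {(Inl u, Inl v) | u v. (u, v) \<in> arcs N \<and> in_clade N u \<and> in_clade N v}"

definition elementary3 :: "('v, 's) net \<Rightarrow> ('v + 'v) set" where
  "elementary3 N = {x \<in> step3_nodes N. card {y. (y, x) \<in> step3_arcs N} = 1 \<and>
                                      card {y. (x, y) \<in> step3_arcs N} = 1}"

definition sum_label :: "('v, 's) net \<Rightarrow> ('v + 'v) \<Rightarrow> 's" where
  "sum_label N x = (case x of Inl v \<Rightarrow> label N v | Inr _ \<Rightarrow> undefined)"

definition reduced :: "('v, 's) net \<Rightarrow> ('v + 'v, 's) net" where
  "reduced N =
    (if \<not> (\<exists>u \<in> nodes N. \<exists>v \<in> nodes N. u \<noteq> v \<and> convergent N u v)
     then \<lparr>nodes = Inl ` nodes N, arcs = map_prod Inl Inl ` arcs N, label = sum_label N\<rparr>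
     else
       \<lparr>nodes = step3_nodes N - elementary3 N,
        arcs = {(a, b). a \<in> step3_nodes N - elementary3 N \<and> b \<in> step3_nodes N - elementary3 N \<and>
                        (\<exists>c. (a, c) \<in> step3_arcs N \<and>
                             (c, b) \<in> {(x, y) \<in> step3_arcs N. x \<in> elementary3 N}\<^sup>*)},
        label = sum_label N\<rparr>)"

definition net_iso :: "('a, 's) net \<Rightarrow> ('b, 's) net \<Rightarrow> bool" where
  "net_iso A B \<longleftrightarrow> (\<exists>f. bij_betw f (nodes A) (nodes B) \<and>
     (\<forall>u \<in> nodes A. \<forall>v \<in> nodes A. (u, v) \<in> arcs A \<longleftrightarrow> (f u, f v) \<in> arcs B) \<and>
     (\<forall>v \<in> leaves A. label B (f v) = label A v))"

end

theory Submission
  imports Defs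
begin

text \<open>Everything the construction of R(N) looks at -- clusters, clades, maximal clades,
  convergent and removed nodes, and the arcs created in steps (2) and (3) -- can be read off
  the nested labels of the nodes and the multiset \<open>\<Upsilon>(N)\<close>. Moreover every node that survives
  step (1) has a nested label occurring only once in \<open>\<Upsilon>(N)\<close>: leaves because the leaf
  labelling is bijective, clade nodes because in a clade equal clusters force comparability, and
  the remaining nodes because they are convergent with no other node. So the nested labels,
  tagged to distinguish symbolic leaves, embed the graph after step (3) injectively into a
  labelled graph that depends on \<open>\<Upsilon>(N)\<close> only. Networks with \<open>\<Upsilon>(N\<^sub>1) = \<Upsilon>(N\<^sub>2)\<close> therefore
  have isomorphic graphs after step (3), and suppressing elementary nodes in step (4)
  preserves isomorphism. Without convergent pairs all nested labels are distinct and the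
  same argument applies to N itself.\<close>

lemma count_image_mset_mset_set:
  assumes "finite A"
  shows "count (image_mset f (mset_set A)) y = card {x \<in> A. f x = y}"
proof -
  have "count (image_mset f (mset_set A)) y = size (filter_mset (\<lambda>z. z = y) (image_mset f (mset_set A)))"
    by (simp add: filter_eq_replicate_mset)
  also have "\<dots> = card {x \<in> A. f x = y}"
    using assms by (simp add: filter_mset_image_mset)
  finally show ?thesis .
qed

lemma two_le_card_iff: "finite A \<Longrightarrow> x \<in> A \<Longrightarrow> 2 \<le> card A \<longleftrightarrow> (\<exists>y\<in>A. y \<noteq> x)"
proof -
  assume A: "finite A" "x \<in> A"
  have "2 \<le> card A \<longleftrightarrow> \<not> card A \<le> Suc 0" by auto
  also have "\<dots> \<longleftrightarrow> \<not> (\<forall>y\<in>A. \<forall>z\<in>A. y = z)" using card_le_Suc0_iff_eq[OF A(1)] by simp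
  also have "\<dots> \<longleftrightarrow> (\<exists>y\<in>A. y \<noteq> x)" using A(2) by metis
  finally show ?thesis .
qed

primrec nl_subterms :: "'s nlabel \<Rightarrow> 's nlabel set" where
  "nl_subterms (NLeaf s) = {NLeaf s}"
| "nl_subterms (NNode M) = insert (NNode M) (\<Union> (set_mset (image_mset nl_subterms M)))"

primrec nl_taxa :: "'s nlabel \<Rightarrow> 's set" where
  "nl_taxa (NLeaf s) = {s}"
| "nl_taxa (NNode M) = \<Union> (set_mset (image_mset nl_taxa M))"

primrec nl_size :: "'s nlabel \<Rightarrow> nat" where
  "nl_size (NLeaf s) = 0"
| "nl_size (NNode M) = Suc (\<Sum>K\<in>#M. nl_size K)"

fun nl_children :: "'s nlabel \<Rightarrow> 's nlabel multiset" where
  "nl_children (NLeaf s) = {#}"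
| "nl_children (NNode M) = M"

lemma nl_subterms_refl: "K \<in> nl_subterms K"
  by (cases K) auto

lemma nl_subterms_trans: "K \<in> nl_subterms L \<Longrightarrow> L \<in> nl_subterms M \<Longrightarrow> K \<in> nl_subterms M"
  by (induction M arbitrary: L) auto

lemma nl_children_subterms: "K \<in># nl_children L \<Longrightarrow> K \<in> nl_subterms L"
  by (cases L) (auto intro: nl_subterms_refl)

lemma nl_size_children_less: "K \<in># nl_children L \<Longrightarrow> nl_size K < nl_size L"
proof (cases L)
  case (NNode M)
  assume "K \<in># nl_children L"
  then obtain M' where "M = add_mset K M'"
    using NNode by (auto dest: multi_member_split)
  then show ?thesis using NNode by simp
qed simp

section \<open>Isomorphisms and suppression of elementary nodes\<close>

definition graph_iso :: "('a \<Rightarrow> 'b) \<Rightarrow> ('a, 's) net \<Rightarrow> ('b, 's) net \<Rightarrow> bool" where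
  "graph_iso f G H \<longleftrightarrow> bij_betw f (nodes G) (nodes H) \<and>
     (\<forall>x\<in>nodes G. \<forall>y\<in>nodes G. (x, y) \<in> arcs G \<longleftrightarrow> (f x, f y) \<in> arcs H)"

lemma net_iso_iff_graph_iso:
  "net_iso G H \<longleftrightarrow> (\<exists>f. graph_iso f G H \<and> (\<forall>x\<in>leaves G. label H (f x) = label G x))"
  unfolding net_iso_def graph_iso_def by blast

lemma graph_iso_inv:
  assumes iso: "graph_iso f G H"
  shows "graph_iso (inv_into (nodes G) f) H G"
proof -
  let ?g = "inv_into (nodes G) f"
  have f: "bij_betw f (nodes G) (nodes H)" using iso unfolding graph_iso_def by blast
  have g: "?g y \<in> nodes G" "f (?g y) = y" if "y \<in> nodes H" for y
    using f that unfolding bij_betw_def by (auto simp: f_inv_into_f inv_into_into)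
  have "(x, y) \<in> arcs H \<longleftrightarrow> (?g x, ?g y) \<in> arcs G" if "x \<in> nodes H" "y \<in> nodes H" for x y
    using iso g[OF that(1)] g[OF that(2)] unfolding graph_iso_def by metis
  then show ?thesis using bij_betw_inv_into[OF f] unfolding graph_iso_def by blast
qed

lemma graph_iso_parents_children:
  assumes iso: "graph_iso f G H"
    and arcs_G: "arcs G \<subseteq> nodes G \<times> nodes G" and arcs_H: "arcs H \<subseteq> nodes H \<times> nodes H"
    and x: "x \<in> nodes G"
  shows "parents H (f x) = f ` parents G x" and "children H (f x) = f ` children G x"
proof -
  have img: "f ` nodes G = nodes H" and arcs_iff: "\<And>y z. y \<in> nodes G \<Longrightarrow> z \<in> nodes G \<Longrightarrow>
      (y, z) \<in> arcs G \<longleftrightarrow> (f y, f z) \<in> arcs H"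
    using iso unfolding graph_iso_def bij_betw_def by auto
  have image_eq: "{y. R y (f x)} = f ` {y. R' y x}"
    if R: "\<And>y. R y (f x) \<Longrightarrow> y \<in> nodes H" "\<And>y. R' y x \<Longrightarrow> y \<in> nodes G"
      "\<And>y. y \<in> nodes G \<Longrightarrow> R (f y) (f x) \<longleftrightarrow> R' y x" for R R'
  proof (intro set_eqI iffI)
    fix z assume "z \<in> {y. R y (f x)}"
    moreover from this obtain y where "y \<in> nodes G" "z = f y" using R(1) img by auto
    ultimately show "z \<in> f ` {y. R' y x}" using R(3) by auto
  qed (use R in auto)
  show "parents H (f x) = f ` parents G x"
    unfolding parents_def using arcs_G arcs_H arcs_iff x
    by (intro image_eq[of "\<lambda>y z. (y, z) \<in> arcs H" "\<lambda>y z. (y, z) \<in> arcs G"]) auto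
  show "children H (f x) = f ` children G x"
    unfolding children_def using arcs_G arcs_H arcs_iff x
    by (intro image_eq[of "\<lambda>y z. (z, y) \<in> arcs H" "\<lambda>y z. (z, y) \<in> arcs G"]) auto
qed

lemma graph_iso_leaves:
  assumes "graph_iso f G H"
    and "arcs G \<subseteq> nodes G \<times> nodes G" "arcs H \<subseteq> nodes H \<times> nodes H"
    and x: "x \<in> leaves G"
  shows "f x \<in> leaves H"
proof -
  have xG: "x \<in> nodes G" and "children G x = {}" using x unfolding leaves_def by auto
  then have "children H (f x) = {}" using graph_iso_parents_children(2)[OF assms(1-3) xG] by simp
  moreover have "f x \<in> nodes H" using assms(1) xG unfolding graph_iso_def bij_betw_def by auto
  ultimately show ?thesis unfolding leaves_def by simp
qed

lemma graph_iso_by_labelling: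
  assumes inj_A: "inj_on \<phi> (nodes A)" and inj_B: "inj_on \<psi> (nodes B)"
    and same_image: "\<phi> ` nodes A = \<psi> ` nodes B"
    and arcs_A: "\<And>x y. x \<in> nodes A \<Longrightarrow> y \<in> nodes A \<Longrightarrow> (x, y) \<in> arcs A \<longleftrightarrow> P (\<phi> x) (\<phi> y)"
    and arcs_B: "\<And>x y. x \<in> nodes B \<Longrightarrow> y \<in> nodes B \<Longrightarrow> (x, y) \<in> arcs B \<longleftrightarrow> P (\<psi> x) (\<psi> y)"
  obtains f where "graph_iso f A B" and "\<And>x. x \<in> nodes A \<Longrightarrow> \<psi> (f x) = \<phi> x"
proof
  let ?f = "\<lambda>x. inv_into (nodes B) \<psi> (\<phi> x)"
  have f: "?f x \<in> nodes B" "\<psi> (?f x) = \<phi> x" if "x \<in> nodes A" for x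
  proof -
    have "\<phi> x \<in> \<psi> ` nodes B" using same_image that by blast
    then show "?f x \<in> nodes B" "\<psi> (?f x) = \<phi> x" by (simp_all add: inv_into_into f_inv_into_f)
  qed
  have "inj_on ?f (nodes A)"
  proof (rule inj_onI)
    fix x y assume "x \<in> nodes A" "y \<in> nodes A" "?f x = ?f y"
    then show "x = y" using f(2) inj_onD[OF inj_A] by metis
  qed
  moreover have "?f ` nodes A = nodes B"
  proof
    show "nodes B \<subseteq> ?f ` nodes A"
    proof
      fix y assume y: "y \<in> nodes B"
      then obtain x where x: "x \<in> nodes A" "\<phi> x = \<psi> y" using same_image by (metis imageE imageI)
      then have "?f x = y" using y inj_B by simp
      then show "y \<in> ?f ` nodes A" using x by blast
    qed
  qed (use f in blast)
  moreover have "(x, y) \<in> arcs A \<longleftrightarrow> (?f x, ?f y) \<in> arcs B" if "x \<in> nodes A" "y \<in> nodes A" for x y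
    using arcs_A[OF that] arcs_B[OF f(1)[OF that(1)] f(1)[OF that(2)]] f(2) that by simp
  ultimately show "graph_iso ?f A B" unfolding graph_iso_def bij_betw_def by blast
  show "\<psi> (?f x) = \<phi> x" if "x \<in> nodes A" for x using f that by blast
qed

lemma net_iso_by_labelling:
  assumes arcs_A_subset: "arcs A \<subseteq> nodes A \<times> nodes A" and arcs_B_subset: "arcs B \<subseteq> nodes B \<times> nodes B"
    and inj_A: "inj_on \<phi> (nodes A)" and inj_B: "inj_on \<psi> (nodes B)"
    and same_image: "\<phi> ` nodes A = \<psi> ` nodes B"
    and arcs_A: "\<And>x y. x \<in> nodes A \<Longrightarrow> y \<in> nodes A \<Longrightarrow> (x, y) \<in> arcs A \<longleftrightarrow> P (\<phi> x) (\<phi> y)"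
    and arcs_B: "\<And>x y. x \<in> nodes B \<Longrightarrow> y \<in> nodes B \<Longrightarrow> (x, y) \<in> arcs B \<longleftrightarrow> P (\<psi> x) (\<psi> y)"
    and label_A: "\<And>x. x \<in> leaves A \<Longrightarrow> label A x = taxon (\<phi> x)"
    and label_B: "\<And>y. y \<in> leaves B \<Longrightarrow> label B y = taxon (\<psi> y)"
  shows "net_iso A B"
proof -
  obtain f where f: "graph_iso f A B" and f_label: "\<And>x. x \<in> nodes A \<Longrightarrow> \<psi> (f x) = \<phi> x"
    using graph_iso_by_labelling[OF inj_A inj_B same_image arcs_A arcs_B] by blast
  have "label B (f x) = label A x" if "x \<in> leaves A" for x
    using that graph_iso_leaves[OF f arcs_A_subset arcs_B_subset] label_A label_B f_label
    unfolding leaves_def by auto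
  then show ?thesis using f unfolding net_iso_iff_graph_iso by blast
qed

definition elementary :: "('a, 's) net \<Rightarrow> 'a set" where
  "elementary G = {x \<in> nodes G. card (parents G x) = 1 \<and> card (children G x) = 1}"

definition suppress :: "('a, 's) net \<Rightarrow> ('a, 's) net" where
  "suppress G =
     \<lparr>nodes = nodes G - elementary G,
      arcs = {(a, b). a \<in> nodes G - elementary G \<and> b \<in> nodes G - elementary G \<and>
                      (\<exists>c. (a, c) \<in> arcs G \<and> (c, b) \<in> {(x, y) \<in> arcs G. x \<in> elementary G}\<^sup>*)},
      label = label G\<rparr>"

lemma graph_iso_elementary:
  assumes iso: "graph_iso f G H"
    and arcs_G: "arcs G \<subseteq> nodes G \<times> nodes G" and arcs_H: "arcs H \<subseteq> nodes H \<times> nodes H"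
    and x: "x \<in> nodes G"
  shows "f x \<in> elementary H \<longleftrightarrow> x \<in> elementary G"
proof -
  have inj: "inj_on f (nodes G)" and img: "f ` nodes G = nodes H"
    using iso unfolding graph_iso_def bij_betw_def by auto
  have "parents G x \<subseteq> nodes G" "children G x \<subseteq> nodes G"
    using arcs_G unfolding parents_def children_def by auto
  then have "card (parents H (f x)) = card (parents G x)"
    "card (children H (f x)) = card (children G x)"
    using graph_iso_parents_children[OF iso arcs_G arcs_H x] card_image inj_on_subset[OF inj]
    by metis+
  then show ?thesis unfolding elementary_def using x img by auto
qed

lemma graph_iso_suppress_arc:
  assumes iso: "graph_iso f G H"
    and arcs_G: "arcs G \<subseteq> nodes G \<times> nodes G" and arcs_H: "arcs H \<subseteq> nodes H \<times> nodes H"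
    and ab: "(a, b) \<in> arcs (suppress G)"
  shows "(f a, f b) \<in> arcs (suppress H)"
proof -
  let ?P = "\<lambda>G. {(x, y) \<in> arcs G. x \<in> elementary G}"
  have el: "\<And>x. x \<in> nodes G \<Longrightarrow> f x \<in> elementary H \<longleftrightarrow> x \<in> elementary G"
    using graph_iso_elementary[OF iso arcs_G arcs_H] by blast
  have f: "f x \<in> nodes H" if "x \<in> nodes G" for x
    using iso that unfolding graph_iso_def bij_betw_def by auto
  have arcs_iff: "\<forall>x\<in>nodes G. \<forall>y\<in>nodes G. (x, y) \<in> arcs G \<longleftrightarrow> (f x, f y) \<in> arcs H"
    using iso unfolding graph_iso_def by blast
  obtain c where a: "a \<in> nodes G - elementary G" and b: "b \<in> nodes G - elementary G"
    and ac: "(a, c) \<in> arcs G" and cb: "(c, b) \<in> (?P G)\<^sup>*"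
    using ab unfolding suppress_def by auto
  have "(f c, f y) \<in> (?P H)\<^sup>* \<and> y \<in> nodes G" if "(c, y) \<in> (?P G)\<^sup>*" for y
    using that
  proof (induction rule: rtrancl_induct)
    case (step y z)
    then have "y \<in> nodes G" "z \<in> nodes G" using arcs_G by auto
    with step have "(f y, f z) \<in> ?P H" using arcs_iff el by auto
    with step show ?case using \<open>z \<in> nodes G\<close> by (auto intro: rtrancl_into_rtrancl)
  qed (use ac arcs_G in auto)
  moreover have "f a \<in> nodes H - elementary H" "f b \<in> nodes H - elementary H"
    using a b el f by auto
  moreover have "(f a, f c) \<in> arcs H" using ac arcs_G arcs_iff by auto
  ultimately show ?thesis using cb unfolding suppress_def by auto
qed

lemma graph_iso_suppress:
  assumes iso: "graph_iso f G H"
    and arcs_G: "arcs G \<subseteq> nodes G \<times> nodes G" and arcs_H: "arcs H \<subseteq> nodes H \<times> nodes H"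
  shows "graph_iso f (suppress G) (suppress H)"
proof -
  let ?g = "inv_into (nodes G) f"
  have iso_g: "graph_iso ?g H G" using iso by (rule graph_iso_inv)
  have f: "bij_betw f (nodes G) (nodes H)" using iso unfolding graph_iso_def by blast
  have gf: "?g (f x) = x" if "x \<in> nodes G" for x
    using f that unfolding bij_betw_def by simp
  have fg: "f (?g y) = y" "?g y \<in> nodes G" if "y \<in> nodes H" for y
    using f that unfolding bij_betw_def by (auto simp: f_inv_into_f inv_into_into)
  have el: "f x \<in> elementary H \<longleftrightarrow> x \<in> elementary G" if "x \<in> nodes G" for x
    using graph_iso_elementary[OF iso arcs_G arcs_H that] .
  have "f ` (nodes G - elementary G) = nodes H - elementary H"
  proof
    show "nodes H - elementary H \<subseteq> f ` (nodes G - elementary G)"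
    proof
      fix y assume y: "y \<in> nodes H - elementary H"
      then have "?g y \<in> nodes G - elementary G" using fg el[of "?g y"] by auto
      then show "y \<in> f ` (nodes G - elementary G)" using fg y by (metis DiffD1 imageI)
    qed
  qed (use el f in \<open>auto simp: bij_betw_def\<close>)
  then have "bij_betw f (nodes (suppress G)) (nodes (suppress H))"
    using f unfolding suppress_def bij_betw_def by (auto intro: inj_on_subset)
  moreover have "(a, b) \<in> arcs (suppress G) \<longleftrightarrow> (f a, f b) \<in> arcs (suppress H)"
    if ab: "a \<in> nodes (suppress G)" "b \<in> nodes (suppress G)" for a b
  proof
    assume "(f a, f b) \<in> arcs (suppress H)"
    then have "(?g (f a), ?g (f b)) \<in> arcs (suppress G)"
      by (rule graph_iso_suppress_arc[OF iso_g arcs_H arcs_G])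
    moreover have "a \<in> nodes G" "b \<in> nodes G" using ab unfolding suppress_def by auto
    ultimately show "(a, b) \<in> arcs (suppress G)" using gf by simp
  qed (rule graph_iso_suppress_arc[OF iso arcs_G arcs_H])
  ultimately show ?thesis unfolding graph_iso_def by blast
qed

text \<open>A child of a non-leaf, followed along elementary nodes, leads to a non-elementary node,
  which is a child after suppression.\<close>

lemma leaves_suppress:
  assumes arcs_G: "arcs G \<subseteq> nodes G \<times> nodes G" and wf: "wf ((arcs G)\<inverse>)"
  shows "leaves (suppress G) \<subseteq> leaves G"
proof
  fix a assume a: "a \<in> leaves (suppress G)"
  let ?P = "{(x, y) \<in> arcs G. x \<in> elementary G}"
  have chain: "\<exists>b \<in> nodes G - elementary G. (c, b) \<in> ?P\<^sup>*" if "c \<in> nodes G" for c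
    using wf that
  proof (induction c rule: wf_induct_rule)
    case (less c)
    show ?case
    proof (cases "c \<in> elementary G")
      case True
      then have "children G c \<noteq> {}" unfolding elementary_def by auto
      then obtain y where y: "(c, y) \<in> arcs G" unfolding children_def by auto
      then obtain b where "b \<in> nodes G - elementary G" "(y, b) \<in> ?P\<^sup>*"
        using less.IH arcs_G by blast
      then show ?thesis using y True by (blast intro: converse_rtrancl_into_rtrancl)
    qed (use less.prems in blast)
  qed
  have aG: "a \<in> nodes G - elementary G" using a unfolding leaves_def suppress_def by simp
  have "(a, c) \<notin> arcs G" for c
  proof
    assume ac: "(a, c) \<in> arcs G"
    then obtain b where "b \<in> nodes G - elementary G" "(c, b) \<in> ?P\<^sup>*" using chain arcs_G by blast
    then have "(a, b) \<in> arcs (suppress G)" using aG ac unfolding suppress_def by auto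
    then show False using a unfolding leaves_def children_def by auto
  qed
  then show "a \<in> leaves G" using aG unfolding leaves_def children_def by auto
qed

lemma net_iso_suppress:
  assumes iso: "net_iso G H"
    and arcs_G: "arcs G \<subseteq> nodes G \<times> nodes G" and arcs_H: "arcs H \<subseteq> nodes H \<times> nodes H"
    and wf: "wf ((arcs G)\<inverse>)"
  shows "net_iso (suppress G) (suppress H)"
proof -
  obtain f where f: "graph_iso f G H" and lab: "\<forall>x\<in>leaves G. label H (f x) = label G x"
    using iso unfolding net_iso_iff_graph_iso by blast
  have "label (suppress H) (f x) = label (suppress G) x" if "x \<in> leaves (suppress G)" for x
    using lab leaves_suppress[OF arcs_G wf] that unfolding suppress_def by auto
  then show ?thesis
    using graph_iso_suppress[OF f arcs_G arcs_H] unfolding net_iso_iff_graph_iso by blast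
qed

section \<open>Nested labels in a phylogenetic network\<close>

locale phylo_network =
  fixes S :: "'s set" and N :: "('v, 's) net"
  assumes phylo_net: "phylo_net S N"
begin

abbreviation "V \<equiv> nodes N"
abbreviation "E \<equiv> arcs N"
abbreviation "\<ll> \<equiv> nested_label N"
abbreviation "U \<equiv> Upsilon N"

lemma finite_nodes: "finite V"
  and arcs_subset: "E \<subseteq> V \<times> V"
  and acyclic_arcs: "acyclic E"
  and bij_label: "bij_betw (label N) (leaves N) S"
  using phylo_net unfolding phylo_net_def by auto

lemma wf_converse_arcs: "wf (E\<inverse>)"
proof -
  have "finite E" using finite_subset[OF arcs_subset] finite_nodes by blast
  then show ?thesis using acyclic_arcs by (rule finite_acyclic_wf_converse)
qed

lemma arc_tail: "(u, v) \<in> E \<Longrightarrow> u \<in> V"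
  and arc_head: "(u, v) \<in> E \<Longrightarrow> v \<in> V"
  using arcs_subset by auto

lemma rtrancl_node: "(u, v) \<in> E\<^sup>* \<Longrightarrow> u \<in> V \<Longrightarrow> v \<in> V"
  by (induction rule: rtrancl_induct) (auto dest: arc_head)

lemma finite_children: "finite (children N v)"
  by (rule finite_subset[OF _ finite_nodes]) (auto simp: children_def dest: arc_head)

lemma finite_parents: "finite (parents N v)"
  by (rule finite_subset[OF _ finite_nodes]) (auto simp: parents_def dest: arc_tail)

lemma leaves_iff: "v \<in> leaves N \<longleftrightarrow> v \<in> V \<and> (\<forall>w. (v, w) \<notin> E)"
  unfolding leaves_def children_def by auto

lemma has_nl_exists: "v \<in> V \<Longrightarrow> \<exists>l. has_nl N v l"
proof (induction v rule: wf_induct_rule[OF wf_converse_arcs])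
  case (1 v)
  show ?case
  proof (cases "children N v = {}")
    case True
    then have "v \<in> leaves N" using 1 unfolding leaves_def by auto
    then show ?thesis by (blast intro: has_nl.leaf)
  next
    case False
    have "has_nl N c (SOME l. has_nl N c l)" if "c \<in> children N v" for c
      using 1 that arc_head[of v c] unfolding children_def by (blast intro: someI_ex)
    then show ?thesis using has_nl.node[OF 1(2) False, of "\<lambda>c. SOME l. has_nl N c l"] by blast
  qed
qed

lemma has_nl_unique: "has_nl N v l \<Longrightarrow> has_nl N v l' \<Longrightarrow> l = l'"
proof (induction arbitrary: l' rule: has_nl.induct)
  case (leaf v)
  then show ?case by (auto elim: has_nl.cases simp: leaves_def)
next
  case (node v f)
  from node.prems obtain g where g: "l' = NNode (image_mset g (mset_set (children N v)))"
    "\<forall>c\<in>children N v. has_nl N c (g c)"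
    using node.hyps(2) by (cases rule: has_nl.cases) (auto simp: leaves_def)
  have "image_mset f (mset_set (children N v)) = image_mset g (mset_set (children N v))"
    using node.IH g(2) finite_children by (intro image_mset_cong) simp
  then show ?case using g by simp
qed

lemma has_nested_label: "v \<in> V \<Longrightarrow> has_nl N v (\<ll> v)"
  unfolding nested_label_def using has_nl_exists has_nl_unique by (metis theI)

lemma nested_label_leaf: "v \<in> leaves N \<Longrightarrow> \<ll> v = NLeaf (label N v)"
  using has_nl_unique[OF has_nested_label has_nl.leaf] leaves_iff by blast

lemma nested_label_node:
  assumes "v \<in> V" "v \<notin> leaves N"
  shows "\<ll> v = NNode (image_mset \<ll> (mset_set (children N v)))"
proof -
  have "children N v \<noteq> {}" using assms unfolding leaves_def by blast
  then have "has_nl N v (NNode (image_mset \<ll> (mset_set (children N v))))"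
    by (rule has_nl.node[OF assms(1)]) (auto simp: children_def intro: has_nested_label arc_head)
  then show ?thesis using has_nested_label[OF assms(1)] has_nl_unique by blast
qed

lemma nl_children_nested_label:
  "v \<in> V \<Longrightarrow> nl_children (\<ll> v) = image_mset \<ll> (mset_set (children N v))"
  by (cases "v \<in> leaves N") (auto simp: nested_label_leaf nested_label_node leaves_def)

lemma set_nl_children_nested_label: "v \<in> V \<Longrightarrow> set_mset (nl_children (\<ll> v)) = \<ll> ` children N v"
  using nl_children_nested_label finite_children by simp

lemma arc_nl_children: "(v, c) \<in> E \<Longrightarrow> \<ll> c \<in># nl_children (\<ll> v)"
  using set_nl_children_nested_label arc_tail unfolding children_def by auto

lemma nl_children_arc: "v \<in> V \<Longrightarrow> K \<in># nl_children (\<ll> v) \<Longrightarrow> \<exists>c. (v, c) \<in> E \<and> \<ll> c = K"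
  using set_nl_children_nested_label unfolding children_def by auto

lemma nl_size_arc_less: "(v, w) \<in> E \<Longrightarrow> nl_size (\<ll> w) < nl_size (\<ll> v)"
  using arc_nl_children nl_size_children_less by blast

lemma nl_size_trancl_less: "(v, w) \<in> E\<^sup>+ \<Longrightarrow> nl_size (\<ll> w) < nl_size (\<ll> v)"
  by (induction rule: trancl_induct) (use nl_size_arc_less less_trans in blast)+

lemma nl_size_rtrancl_le: "(v, w) \<in> E\<^sup>* \<Longrightarrow> nl_size (\<ll> w) \<le> nl_size (\<ll> v)"
  using nl_size_trancl_less by (metis le_less rtrancl_eq_or_trancl)

lemma rtrancl_nl_subterms: "(v, w) \<in> E\<^sup>* \<Longrightarrow> \<ll> w \<in> nl_subterms (\<ll> v)"
  by (induction rule: rtrancl_induct)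
    (use nl_subterms_refl arc_nl_children nl_children_subterms nl_subterms_trans in blast)+

lemma nl_subterms_rtrancl:
  "v \<in> V \<Longrightarrow> K \<in> nl_subterms (\<ll> v) \<Longrightarrow> \<exists>w. (v, w) \<in> E\<^sup>* \<and> \<ll> w = K"
proof (induction v arbitrary: K rule: wf_induct_rule[OF wf_converse_arcs])
  case (1 v)
  show ?case
  proof (cases "v \<in> leaves N")
    case True then show ?thesis using 1 nested_label_leaf by auto
  next
    case False
    then have "K = \<ll> v \<or> (\<exists>c \<in> children N v. K \<in> nl_subterms (\<ll> c))"
      using 1(3) nested_label_node[OF 1(2)] finite_children by auto
    then show ?thesis
    proof
      assume "\<exists>c \<in> children N v. K \<in> nl_subterms (\<ll> c)"
      then obtain c where c: "(v, c) \<in> E" "K \<in> nl_subterms (\<ll> c)"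
        unfolding children_def by auto
      then obtain w where "(c, w) \<in> E\<^sup>*" "\<ll> w = K" using 1(1)[of c] arc_head by blast
      then show ?thesis using c by (blast intro: converse_rtrancl_into_rtrancl)
    qed auto
  qed
qed

lemma rtrancl_same_nested_label: "(v, w) \<in> E\<^sup>* \<Longrightarrow> \<ll> w = \<ll> v \<Longrightarrow> w = v"
  using nl_size_trancl_less[of v w] by (auto simp: rtrancl_eq_or_trancl)

lemma count_Upsilon: "count U K = card {v \<in> V. \<ll> v = K}"
  unfolding Upsilon_def by (rule count_image_mset_mset_set[OF finite_nodes])

lemma mem_Upsilon_iff: "K \<in># U \<longleftrightarrow> (\<exists>v\<in>V. \<ll> v = K)"
  unfolding Upsilon_def using finite_nodes by auto

definition unique_nl :: "'v \<Rightarrow> bool" where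
  "unique_nl v \<longleftrightarrow> v \<in> V \<and> (\<forall>w\<in>V. \<ll> w = \<ll> v \<longrightarrow> w = v)"

lemma unique_nl_iff_count:
  assumes "v \<in> V"
  shows "unique_nl v \<longleftrightarrow> count U (\<ll> v) = 1"
proof -
  have "unique_nl v \<longleftrightarrow> {w \<in> V. \<ll> w = \<ll> v} = {v}"
    unfolding unique_nl_def using assms by auto
  also have "\<dots> \<longleftrightarrow> card {w \<in> V. \<ll> w = \<ll> v} = 1"
  proof
    assume "card {w \<in> V. \<ll> w = \<ll> v} = 1"
    then obtain x where "{w \<in> V. \<ll> w = \<ll> v} = {x}" by (auto simp: card_1_singleton_iff)
    then show "{w \<in> V. \<ll> w = \<ll> v} = {v}" using assms by auto
  qed simp
  finally show ?thesis by (simp add: count_Upsilon)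
qed

lemma leaf_iff_nested_label: "v \<in> V \<Longrightarrow> \<ll> v = NLeaf s \<longleftrightarrow> v \<in> leaves N \<and> label N v = s"
  by (cases "v \<in> leaves N") (simp_all add: nested_label_leaf nested_label_node)

lemma leaf_unique_nl:
  assumes v: "v \<in> leaves N"
  shows "unique_nl v"
proof -
  have "w = v" if "w \<in> V" "\<ll> w = \<ll> v" for w
  proof -
    have "w \<in> leaves N" "label N w = label N v"
      using that leaf_iff_nested_label nested_label_leaf[OF v] by auto
    then show "w = v" using v bij_label unfolding bij_betw_def inj_on_def by blast
  qed
  then show ?thesis using v unfolding unique_nl_def leaves_def by blast
qed

lemma desc_iff_children: "w \<in> desc N v \<longleftrightarrow> w = v \<or> (\<exists>c\<in>children N v. w \<in> desc N c)"
proof -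
  have "(v, w) \<in> E\<^sup>* \<longleftrightarrow> w = v \<or> (\<exists>c. (v, c) \<in> E \<and> (c, w) \<in> E\<^sup>*)"
    by (blast elim: converse_rtranclE intro: converse_rtrancl_into_rtrancl)
  then show ?thesis unfolding desc_def children_def by blast
qed

lemma cluster_eq_nl_taxa: "v \<in> V \<Longrightarrow> cluster N v = nl_taxa (\<ll> v)"
proof (induction v rule: wf_induct_rule[OF wf_converse_arcs])
  case (1 v)
  show ?case
  proof (cases "v \<in> leaves N")
    case True
    then have "desc N v = {v}" by (auto simp: desc_iff_children[of _ v] leaves_def)
    then show ?thesis using True by (simp add: cluster_def nested_label_leaf)
  next
    case False
    have "leaves N \<inter> desc N v = (\<Union>c\<in>children N v. leaves N \<inter> desc N c)"
      using False by (auto simp: desc_iff_children[of _ v])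
    then have "cluster N v = (\<Union>c\<in>children N v. cluster N c)"
      unfolding cluster_def by (metis image_UN)
    also have "\<dots> = (\<Union>c\<in>children N v. nl_taxa (\<ll> c))"
    proof (rule SUP_cong)
      fix c assume "c \<in> children N v"
      then have "(c, v) \<in> E\<inverse>" "c \<in> V" using arc_head unfolding children_def by auto
      then show "cluster N c = nl_taxa (\<ll> c)" using 1(1) by blast
    qed simp
    finally show ?thesis using nested_label_node[OF 1(2) False] finite_children by simp
  qed
qed

lemma reach_leaf: "v \<in> V \<Longrightarrow> \<exists>x \<in> leaves N. (v, x) \<in> E\<^sup>*"
proof (induction v rule: wf_induct_rule[OF wf_converse_arcs])
  case (1 v)
  show ?case
  proof (cases "v \<in> leaves N")
    case False
    then obtain c where c: "(v, c) \<in> E" using 1(2) leaves_iff by auto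
    then obtain x where "x \<in> leaves N" "(c, x) \<in> E\<^sup>*" using 1(1) arc_head by blast
    then show ?thesis using c by (blast intro: converse_rtrancl_into_rtrancl)
  qed auto
qed

end

section \<open>Clades\<close>

definition parent_count :: "'s nlabel multiset \<Rightarrow> 's nlabel \<Rightarrow> nat" where
  "parent_count UU K = (\<Sum>L\<in>#UU. count (nl_children L) K)"

definition clade_root_nl :: "'s nlabel multiset \<Rightarrow> 's nlabel \<Rightarrow> bool" where
  "clade_root_nl UU L \<longleftrightarrow> L \<in># UU \<and> (\<forall>K \<in> nl_subterms L. count UU K = 1 \<and> parent_count UU K \<le> 1)"

definition in_clade_nl :: "'s nlabel multiset \<Rightarrow> 's nlabel \<Rightarrow> bool" where
  "in_clade_nl UU K \<longleftrightarrow> (\<exists>L. clade_root_nl UU L \<and> K \<in> nl_subterms L)"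

definition max_clade_root_nl :: "'s nlabel multiset \<Rightarrow> 's nlabel \<Rightarrow> bool" where
  "max_clade_root_nl UU L \<longleftrightarrow>
     clade_root_nl UU L \<and> \<not> (\<exists>L'. clade_root_nl UU L' \<and> L' \<noteq> L \<and> L \<in> nl_subterms L')"

context phylo_network
begin

lemma clade_root_node: "clade_root N r \<Longrightarrow> r \<in> V"
  unfolding clade_root_def by simp

lemma in_clade_node: "in_clade N v \<Longrightarrow> v \<in> V"
  unfolding in_clade_def clade_root_def desc_def using rtrancl_node by blast

lemma in_clade_rtrancl: "in_clade N v \<Longrightarrow> (v, w) \<in> E\<^sup>* \<Longrightarrow> in_clade N w"
  unfolding in_clade_def desc_def by (meson mem_Collect_eq rtrancl_trans)

lemma in_clade_arc: "in_clade N v \<Longrightarrow> (v, w) \<in> E \<Longrightarrow> in_clade N w"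
  using in_clade_rtrancl by blast

lemma in_clade_tree_node: "in_clade N v \<Longrightarrow> tree_node N v"
  unfolding in_clade_def clade_root_def by blast

lemma tree_node_parents_eq:
  assumes "tree_node N v" "(u, v) \<in> E" "(u', v) \<in> E"
  shows "u = u'"
proof -
  have "u \<in> parents N v" "u' \<in> parents N v" using assms(2,3) unfolding parents_def by auto
  then show ?thesis
    using assms(1) card_le_Suc0_iff_eq[OF finite_parents[of v]] unfolding tree_node_def by auto
qed

lemma in_clade_rtrancl_comparable:
  assumes w: "in_clade N w" and "(w', y) \<in> E\<^sup>*" "(w, y) \<in> E\<^sup>*"
  shows "(w', w) \<in> E\<^sup>* \<or> (w, w') \<in> E\<^sup>*"
  using assms(2,3)
proof (induction rule: rtrancl_induct)
  case (step z y)
  show ?case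
  proof (cases "y = w")
    case False
    then have "(w, y) \<in> E\<^sup>+" using step(4) by (simp add: rtrancl_eq_or_trancl)
    then obtain p where p: "(w, p) \<in> E\<^sup>*" "(p, y) \<in> E" by (meson tranclD2)
    have "tree_node N y" using in_clade_rtrancl[OF w step(4)] in_clade_tree_node by blast
    then have "z = p" using tree_node_parents_eq step(2) p(2) by blast
    then show ?thesis using step(3) p(1) by blast
  qed (use step(1,2) in auto)
qed simp

text \<open>Two nodes with the same nested label have the same cluster, hence share a leaf below
  them; inside a clade every node has at most one parent, so the two nodes lie on one path.\<close>

lemma in_clade_unique_nl:
  assumes w: "in_clade N w"
  shows "unique_nl w"
proof -
  have wV: "w \<in> V" using in_clade_node w by blast
  have "w' = w" if w': "w' \<in> V" "\<ll> w' = \<ll> w" for w'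
  proof -
    obtain x where x: "x \<in> leaves N" "(w, x) \<in> E\<^sup>*" using reach_leaf wV by blast
    have "label N x \<in> cluster N w" using x unfolding cluster_def desc_def by auto
    also have "cluster N w = cluster N w'" using cluster_eq_nl_taxa w' wV by simp
    finally obtain x' where x': "x' \<in> leaves N" "(w', x') \<in> E\<^sup>*" "label N x' = label N x"
      unfolding cluster_def desc_def by (auto simp del: Int_iff)
    have "x' = x" using x' x bij_label unfolding bij_betw_def inj_on_def by blast
    then have "(w', w) \<in> E\<^sup>* \<or> (w, w') \<in> E\<^sup>*" using in_clade_rtrancl_comparable[OF w] x' x by blast
    then show "w' = w" using rtrancl_same_nested_label w'(2) by metis
  qed
  then show ?thesis unfolding unique_nl_def using wV by blast
qed

lemma card_parents_eq_parent_count: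
  assumes v: "unique_nl v"
  shows "card (parents N v) = parent_count U (\<ll> v)"
proof -
  have "parent_count U (\<ll> v) = (\<Sum>p\<in>V. count (nl_children (\<ll> p)) (\<ll> v))"
    unfolding parent_count_def Upsilon_def
    by (simp add: sum_unfold_sum_mset image_mset.compositionality comp_def)
  also have "\<dots> = (\<Sum>p\<in>V. if (p, v) \<in> E then 1 else 0)"
  proof (rule sum.cong)
    fix p assume p: "p \<in> V"
    have "count (nl_children (\<ll> p)) (\<ll> v) = card {c \<in> children N p. \<ll> c = \<ll> v}"
      using nl_children_nested_label[OF p] count_image_mset_mset_set[OF finite_children] by simp
    also have "{c \<in> children N p. \<ll> c = \<ll> v} = (if (p, v) \<in> E then {v} else {})"
      using v arc_head unfolding unique_nl_def children_def by auto
    finally show "count (nl_children (\<ll> p)) (\<ll> v) = (if (p, v) \<in> E then 1 else 0)" by simp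
  qed simp
  also have "\<dots> = card {p \<in> V. (p, v) \<in> E}"
    using finite_nodes by (simp add: sum.If_cases Int_def)
  also have "{p \<in> V. (p, v) \<in> E} = parents N v"
    unfolding parents_def using arc_tail by auto
  finally show ?thesis by simp
qed

lemma clade_root_iff_nl: "clade_root N v \<longleftrightarrow> v \<in> V \<and> clade_root_nl U (\<ll> v)"
proof
  assume cr: "clade_root N v"
  then have vV: "v \<in> V" by (rule clade_root_node)
  have "count U K = 1 \<and> parent_count U K \<le> 1" if K: "K \<in> nl_subterms (\<ll> v)" for K
  proof -
    obtain w where w: "(v, w) \<in> E\<^sup>*" "\<ll> w = K" using nl_subterms_rtrancl vV K by blast
    have "in_clade N w" using cr w(1) unfolding in_clade_def desc_def by blast
    then have "unique_nl w" "tree_node N w" using in_clade_unique_nl in_clade_tree_node by auto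
    then show ?thesis using w(2) unique_nl_iff_count card_parents_eq_parent_count
      unfolding unique_nl_def tree_node_def by auto
  qed
  then show "v \<in> V \<and> clade_root_nl U (\<ll> v)"
    unfolding clade_root_nl_def using vV mem_Upsilon_iff by blast
next
  assume a: "v \<in> V \<and> clade_root_nl U (\<ll> v)"
  have "tree_node N w" if w: "w \<in> desc N v" for w
  proof -
    have w: "(v, w) \<in> E\<^sup>*" "w \<in> V" using w rtrancl_node a unfolding desc_def by auto
    then have "count U (\<ll> w) = 1" "parent_count U (\<ll> w) \<le> 1"
      using a rtrancl_nl_subterms unfolding clade_root_nl_def by auto
    then show "tree_node N w"
      using unique_nl_iff_count card_parents_eq_parent_count w(2) unfolding tree_node_def by auto
  qed
  then show "clade_root N v" unfolding clade_root_def using a by blast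
qed

lemma obtain_clade_root:
  assumes "clade_root_nl U L"
  obtains r where "clade_root N r" "\<ll> r = L"
proof -
  obtain r where "r \<in> V" "\<ll> r = L"
    using assms mem_Upsilon_iff unfolding clade_root_nl_def by blast
  then show ?thesis using that assms clade_root_iff_nl by blast
qed

lemma in_clade_iff_nl: "in_clade N v \<longleftrightarrow> v \<in> V \<and> in_clade_nl U (\<ll> v)"
proof
  assume a: "in_clade N v"
  then obtain r where r: "clade_root N r" "(r, v) \<in> E\<^sup>*" unfolding in_clade_def desc_def by auto
  then have "in_clade_nl U (\<ll> v)"
    using clade_root_iff_nl rtrancl_nl_subterms unfolding in_clade_nl_def by blast
  then show "v \<in> V \<and> in_clade_nl U (\<ll> v)" using in_clade_node a by simp
next
  assume a: "v \<in> V \<and> in_clade_nl U (\<ll> v)"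
  then obtain L where L: "clade_root_nl U L" "\<ll> v \<in> nl_subterms L" unfolding in_clade_nl_def by blast
  then obtain r where r: "clade_root N r" "\<ll> r = L" using obtain_clade_root by blast
  then obtain w where w: "(r, w) \<in> E\<^sup>*" "\<ll> w = \<ll> v"
    using nl_subterms_rtrancl clade_root_node L(2) by blast
  then have "in_clade N w" using r unfolding in_clade_def desc_def by blast
  moreover from this have "w = v" using in_clade_unique_nl a w(2) unfolding unique_nl_def by metis
  ultimately show "in_clade N v" by simp
qed

lemma max_clade_root_iff_nl: "max_clade_root N r \<longleftrightarrow> r \<in> V \<and> max_clade_root_nl U (\<ll> r)"
proof -
  have "(\<exists>r'. clade_root N r' \<and> r' \<noteq> r \<and> r \<in> desc N r') \<longleftrightarrow>
        (\<exists>L'. clade_root_nl U L' \<and> L' \<noteq> \<ll> r \<and> \<ll> r \<in> nl_subterms L')" if cr: "clade_root N r"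
  proof
    assume "\<exists>r'. clade_root N r' \<and> r' \<noteq> r \<and> r \<in> desc N r'"
    then obtain r' where r': "clade_root N r'" "r' \<noteq> r" "(r', r) \<in> E\<^sup>*" unfolding desc_def by auto
    have "unique_nl r'" using in_clade_unique_nl r'(1) unfolding in_clade_def desc_def by blast
    then have "\<ll> r' \<noteq> \<ll> r" using r'(2) clade_root_node[OF cr] unfolding unique_nl_def by metis
    then show "\<exists>L'. clade_root_nl U L' \<and> L' \<noteq> \<ll> r \<and> \<ll> r \<in> nl_subterms L'"
      using r' clade_root_iff_nl rtrancl_nl_subterms by blast
  next
    assume "\<exists>L'. clade_root_nl U L' \<and> L' \<noteq> \<ll> r \<and> \<ll> r \<in> nl_subterms L'"
    then obtain L' where L: "clade_root_nl U L'" "L' \<noteq> \<ll> r" "\<ll> r \<in> nl_subterms L'" by blast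
    then obtain r' where r': "clade_root N r'" "\<ll> r' = L'" using obtain_clade_root by blast
    then obtain w where w: "(r', w) \<in> E\<^sup>*" "\<ll> w = \<ll> r"
      using nl_subterms_rtrancl clade_root_node L(3) by blast
    then have "in_clade N w" using r' unfolding in_clade_def desc_def by blast
    then have "w = r" using in_clade_unique_nl clade_root_node[OF cr] w(2) unfolding unique_nl_def by metis
    then show "\<exists>r'. clade_root N r' \<and> r' \<noteq> r \<and> r \<in> desc N r'"
      using r' w L(2) unfolding desc_def by blast
  qed
  then show ?thesis
    unfolding max_clade_root_def max_clade_root_nl_def using clade_root_iff_nl[of r] by metis
qed

section \<open>The construction of the reduced version\<close>

lemma max_clade_root_node: "max_clade_root N r \<Longrightarrow> r \<in> V"
  unfolding max_clade_root_def clade_root_def by simp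

lemma max_clade_root_in_clade: "max_clade_root N r \<Longrightarrow> in_clade N r"
  unfolding max_clade_root_def in_clade_def desc_def by blast

lemma in_clade_child_max_clade_root:
  assumes pc: "(p, c) \<in> E" and p: "\<not> in_clade N p" and c: "in_clade N c"
  shows "max_clade_root N c"
proof -
  obtain r where r: "clade_root N r" "(r, c) \<in> E\<^sup>*" using c unfolding in_clade_def desc_def by auto
  have "clade_root N c"
    using r arc_head[OF pc] unfolding clade_root_def desc_def by (auto intro: rtrancl_trans)
  moreover have "\<not> (clade_root N r' \<and> r' \<noteq> c \<and> c \<in> desc N r')" for r'
  proof
    assume r': "clade_root N r' \<and> r' \<noteq> c \<and> c \<in> desc N r'"
    then have "(r', c) \<in> E\<^sup>+" unfolding desc_def by (auto simp: rtrancl_eq_or_trancl)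
    then obtain q where q: "(r', q) \<in> E\<^sup>*" "(q, c) \<in> E" by (meson tranclD2)
    then have "q = p" using tree_node_parents_eq in_clade_tree_node[OF c] pc by blast
    then have "in_clade N p" using r' q(1) unfolding in_clade_def desc_def by blast
    then show False using p by simp
  qed
  ultimately show ?thesis unfolding max_clade_root_def by blast
qed

lemma max_clade_root_parent: "(p, r) \<in> E \<Longrightarrow> max_clade_root N r \<Longrightarrow> \<not> in_clade N p"
proof
  assume pr: "(p, r) \<in> E" and mr: "max_clade_root N r" and "in_clade N p"
  then obtain r' where r': "clade_root N r'" "(r', p) \<in> E\<^sup>*" unfolding in_clade_def desc_def by auto
  show False
  proof (cases "r' = r")
    case True
    then have "(r, r) \<in> E\<^sup>+" using r'(2) pr by (simp add: rtrancl_into_trancl1)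
    then show False using acyclic_arcs unfolding acyclic_def by blast
  next
    case False
    have "(r', r) \<in> E\<^sup>*" using r'(2) pr by simp
    then show False using False mr r'(1) unfolding max_clade_root_def desc_def by blast
  qed
qed

lemma star_arcs_iff: "(x, y) \<in> star_arcs N \<longleftrightarrow>
   (\<exists>u v. x = Inl u \<and> y = Inl v \<and> (u, v) \<in> E \<and> \<not> in_clade N u \<and> \<not> in_clade N v) \<or>
   (\<exists>p r. x = Inl p \<and> y = Inr r \<and> (p, r) \<in> E \<and> max_clade_root N r)"
  unfolding star_arcs_def by blast

lemma star_arcs_Inl_Inl:
  "(Inl u, Inl v) \<in> star_arcs N \<longleftrightarrow> (u, v) \<in> E \<and> \<not> in_clade N u \<and> \<not> in_clade N v"
  unfolding star_arcs_iff by simp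

lemma star_arcs_Inl_Inr: "(Inl u, Inr r) \<in> star_arcs N \<longleftrightarrow> (u, r) \<in> E \<and> max_clade_root N r"
  unfolding star_arcs_iff by simp

lemma star_arcs_Inr: "(Inr r, y) \<notin> star_arcs N"
  unfolding star_arcs_iff by simp

lemma star_nodes_Inl: "Inl v \<in> star_nodes N \<longleftrightarrow> v \<in> V \<and> \<not> in_clade N v"
  unfolding star_nodes_def by auto

lemma star_nodes_Inr: "Inr r \<in> star_nodes N \<longleftrightarrow> max_clade_root N r"
  unfolding star_nodes_def by auto

lemma star_internal_Inl:
  "Inl v \<in> star_internal N \<longleftrightarrow> v \<in> V \<and> \<not> in_clade N v \<and> v \<notin> leaves N"
proof
  assume "Inl v \<in> star_internal N"
  then obtain y where "(Inl v, y) \<in> star_arcs N" "Inl v \<in> star_nodes N"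
    unfolding star_internal_def by auto
  then show "v \<in> V \<and> \<not> in_clade N v \<and> v \<notin> leaves N"
    unfolding star_arcs_iff star_nodes_Inl leaves_iff by auto
next
  assume v: "v \<in> V \<and> \<not> in_clade N v \<and> v \<notin> leaves N"
  then obtain c where c: "(v, c) \<in> E" using leaves_iff by auto
  have "\<exists>y. (Inl v, y) \<in> star_arcs N"
  proof (cases "in_clade N c")
    case True
    then show ?thesis using in_clade_child_max_clade_root c v star_arcs_Inl_Inr by blast
  qed (use c v star_arcs_Inl_Inl in blast)
  then show "Inl v \<in> star_internal N" unfolding star_internal_def using v star_nodes_Inl by blast
qed

lemma star_internal_Inr: "Inr r \<notin> star_internal N"
  unfolding star_internal_def using star_arcs_Inr by blast

lemma star_leaves_Inl: "Inl v \<in> star_leaves N \<longleftrightarrow> v \<in> leaves N \<and> \<not> in_clade N v"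
proof -
  have "Inl v \<in> star_leaves N \<longleftrightarrow> Inl v \<in> star_nodes N \<and> Inl v \<notin> star_internal N"
    unfolding star_leaves_def star_internal_def by blast
  then show ?thesis using star_nodes_Inl star_internal_Inl leaves_iff by auto
qed

lemma star_leaves_Inr: "Inr r \<in> star_leaves N \<longleftrightarrow> max_clade_root N r"
  unfolding star_leaves_def using star_nodes_Inr star_arcs_Inr by blast

lemma star_trancl_from_Inl:
  "(Inl d, y) \<in> (star_arcs N)\<^sup>+ \<Longrightarrow>
     (\<exists>v. y = Inl v \<and> (d, v) \<in> E\<^sup>+ \<and> \<not> in_clade N v) \<or>
     (\<exists>r. y = Inr r \<and> (d, r) \<in> E\<^sup>+ \<and> max_clade_root N r)"
proof (induction rule: trancl_induct)
  case (step y z)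
  from step.hyps(2) obtain w where w: "y = Inl w" unfolding star_arcs_iff by auto
  with step.IH have "(d, w) \<in> E\<^sup>+" by auto
  with step.hyps(2) w show ?case unfolding star_arcs_iff by (auto intro: trancl_into_trancl)
qed (auto simp: star_arcs_iff)

lemma trancl_star_arcs_Inl_Inl:
  "(d, v) \<in> E\<^sup>+ \<Longrightarrow> \<not> in_clade N d \<Longrightarrow> \<not> in_clade N v \<Longrightarrow> (Inl d, Inl v) \<in> (star_arcs N)\<^sup>+"
proof (induction rule: trancl_induct)
  case (base v)
  then show ?case using star_arcs_Inl_Inl by blast
next
  case (step y z)
  have "\<not> in_clade N y" using step.hyps(2) step.prems(2) in_clade_arc by blast
  then show ?case using step star_arcs_Inl_Inl by (meson trancl.trancl_into_trancl)
qed

lemma trancl_star_arcs_Inl_Inr: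
  assumes "(d, r) \<in> E\<^sup>+" "\<not> in_clade N d" "max_clade_root N r"
  shows "(Inl d, Inr r) \<in> (star_arcs N)\<^sup>+"
proof -
  obtain p where p: "(d, p) \<in> E\<^sup>*" "(p, r) \<in> E" using assms(1) by (meson tranclD2)
  have pr: "(Inl p, Inr r) \<in> star_arcs N" using star_arcs_Inl_Inr p(2) assms(3) by blast
  show ?thesis
  proof (cases "d = p")
    case False
    then have "(d, p) \<in> E\<^sup>+" using p(1) by (simp add: rtrancl_eq_or_trancl)
    then have "(Inl d, Inl p) \<in> (star_arcs N)\<^sup>+"
      using trancl_star_arcs_Inl_Inl assms(2) max_clade_root_parent p(2) assms(3) by blast
    then show ?thesis using pr by (meson trancl.trancl_into_trancl)
  qed (use pr in auto)
qed

lemma rtrancl_star_arcs_Inl_Inl: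
  "\<not> in_clade N c \<Longrightarrow> \<not> in_clade N v \<Longrightarrow> (Inl c, Inl v) \<in> (star_arcs N)\<^sup>* \<longleftrightarrow> (c, v) \<in> E\<^sup>*"
  using star_trancl_from_Inl[of c "Inl v"] trancl_star_arcs_Inl_Inl[of c v]
  by (auto simp: rtrancl_eq_or_trancl)

lemma rtrancl_star_arcs_Inl_Inr:
  assumes "\<not> in_clade N c"
  shows "(Inl c, Inr r) \<in> (star_arcs N)\<^sup>* \<longleftrightarrow> (c, r) \<in> E\<^sup>* \<and> max_clade_root N r"
proof -
  have "c \<noteq> r" if "max_clade_root N r" using assms max_clade_root_in_clade that by blast
  then show ?thesis using star_trancl_from_Inl[of c "Inr r"] trancl_star_arcs_Inl_Inr[of c r] assms
    by (auto simp: rtrancl_eq_or_trancl)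
qed

lemma removed0_iff: "x \<in> removed0 N \<longleftrightarrow> (\<exists>d. x = Inl d \<and>
    d \<in> V \<and> \<not> in_clade N d \<and> d \<notin> leaves N \<and> (\<exists>w\<in>V. w \<noteq> d \<and> convergent N d w))"
  by (cases x) (auto simp: removed0_def star_internal_Inl star_internal_Inr)

lemma Inl_removed_iff: "Inl v \<in> removed N \<longleftrightarrow>
    v \<in> V \<and> \<not> in_clade N v \<and> v \<notin> leaves N \<and> (\<exists>d. Inl d \<in> removed0 N \<and> (d, v) \<in> E\<^sup>*)"
proof
  assume "Inl v \<in> removed N"
  then consider "Inl v \<in> removed0 N"
    | d where "Inl v \<in> star_internal N" "d \<in> removed0 N" "(d, Inl v) \<in> (star_arcs N)\<^sup>+"
    unfolding removed_def by blast
  then show "v \<in> V \<and> \<not> in_clade N v \<and> v \<notin> leaves N \<and> (\<exists>d. Inl d \<in> removed0 N \<and> (d, v) \<in> E\<^sup>*)"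
  proof cases
    case 1
    then show ?thesis using removed0_iff[of "Inl v"] by auto
  next
    case (2 x)
    then obtain d where "x = Inl d" using removed0_iff by blast
    with 2 show ?thesis using star_trancl_from_Inl[of d "Inl v"] star_internal_Inl
      by auto
  qed
next
  assume v: "v \<in> V \<and> \<not> in_clade N v \<and> v \<notin> leaves N \<and> (\<exists>d. Inl d \<in> removed0 N \<and> (d, v) \<in> E\<^sup>*)"
  then obtain d where d: "Inl d \<in> removed0 N" "(d, v) \<in> E\<^sup>*" by blast
  show "Inl v \<in> removed N"
  proof (cases "d = v")
    case False
    then have "(d, v) \<in> E\<^sup>+" using d(2) by (simp add: rtrancl_eq_or_trancl)
    then have "(Inl d, Inl v) \<in> (star_arcs N)\<^sup>+"
      using trancl_star_arcs_Inl_Inl v d(1) removed0_iff by blast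
    then show ?thesis using d(1) v star_internal_Inl unfolding removed_def by blast
  qed (use d(1) in \<open>simp add: removed_def\<close>)
qed

lemma Inr_not_removed: "Inr r \<notin> removed N"
  unfolding removed_def removed0_def using star_internal_Inr by blast

lemma step3_nodes_Inl: "Inl v \<in> step3_nodes N \<longleftrightarrow> v \<in> V \<and> Inl v \<notin> removed N"
  unfolding step3_nodes_def using star_nodes_Inl Inl_removed_iff by auto

lemma step3_nodes_Inr: "Inr r \<in> step3_nodes N \<longleftrightarrow> max_clade_root N r"
  unfolding step3_nodes_def using star_nodes_Inr Inr_not_removed by auto

lemma step3_arcs_iff: "(x, y) \<in> step3_arcs N \<longleftrightarrow>
   ((x, y) \<in> star_arcs N \<and> x \<notin> removed N \<and> y \<notin> removed N) \<or>
   (\<exists>v. x \<in> star_nodes N - removed N \<and> v \<in> removed N \<and> (x, v) \<in> star_arcs N \<and>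
        y \<in> star_leaves N \<and> (v, y) \<in> (star_arcs N)\<^sup>*) \<or>
   (\<exists>r. x = Inr r \<and> y = Inl r \<and> max_clade_root N r) \<or>
   (\<exists>u v. x = Inl u \<and> y = Inl v \<and> (u, v) \<in> E \<and> in_clade N u \<and> in_clade N v)"
  unfolding step3_arcs_def by blast

lemma step2_arc_from_Inl_iff:
  "(\<exists>v. Inl u \<in> star_nodes N - removed N \<and> v \<in> removed N \<and> (Inl u, v) \<in> star_arcs N \<and>
        y \<in> star_leaves N \<and> (v, y) \<in> (star_arcs N)\<^sup>*) \<longleftrightarrow>
   u \<in> V \<and> \<not> in_clade N u \<and> Inl u \<notin> removed N \<and> y \<in> star_leaves N \<and>
   (\<exists>c. (u, c) \<in> E \<and> Inl c \<in> removed N \<and> (Inl c, y) \<in> (star_arcs N)\<^sup>*)"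
proof
  assume "\<exists>v. Inl u \<in> star_nodes N - removed N \<and> v \<in> removed N \<and> (Inl u, v) \<in> star_arcs N \<and>
        y \<in> star_leaves N \<and> (v, y) \<in> (star_arcs N)\<^sup>*"
  then obtain v where v: "Inl u \<in> star_nodes N" "Inl u \<notin> removed N" "v \<in> removed N"
    "(Inl u, v) \<in> star_arcs N" "y \<in> star_leaves N" "(v, y) \<in> (star_arcs N)\<^sup>*" by blast
  obtain c where "v = Inl c" using v(3) Inr_not_removed by (cases v) auto
  with v show "u \<in> V \<and> \<not> in_clade N u \<and> Inl u \<notin> removed N \<and> y \<in> star_leaves N \<and>
      (\<exists>c. (u, c) \<in> E \<and> Inl c \<in> removed N \<and> (Inl c, y) \<in> (star_arcs N)\<^sup>*)"
    using star_nodes_Inl star_arcs_Inl_Inl by blast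
next
  assume u: "u \<in> V \<and> \<not> in_clade N u \<and> Inl u \<notin> removed N \<and> y \<in> star_leaves N \<and>
      (\<exists>c. (u, c) \<in> E \<and> Inl c \<in> removed N \<and> (Inl c, y) \<in> (star_arcs N)\<^sup>*)"
  then obtain c where c: "(u, c) \<in> E" "Inl c \<in> removed N" "(Inl c, y) \<in> (star_arcs N)\<^sup>*" by blast
  have "(Inl u, Inl c) \<in> star_arcs N" using star_arcs_Inl_Inl c(1,2) u Inl_removed_iff by blast
  then show "\<exists>v. Inl u \<in> star_nodes N - removed N \<and> v \<in> removed N \<and> (Inl u, v) \<in> star_arcs N \<and>
        y \<in> star_leaves N \<and> (v, y) \<in> (star_arcs N)\<^sup>*"
    using u c star_nodes_Inl by blast
qed

lemma step3_arcs_Inl_Inl: "(Inl u, Inl v) \<in> step3_arcs N \<longleftrightarrow>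
   ((u, v) \<in> E \<and> \<not> in_clade N u \<and> \<not> in_clade N v \<and> Inl u \<notin> removed N \<and> Inl v \<notin> removed N) \<or>
   (u \<in> V \<and> \<not> in_clade N u \<and> Inl u \<notin> removed N \<and> v \<in> leaves N \<and> \<not> in_clade N v \<and>
     (\<exists>c. (u, c) \<in> E \<and> Inl c \<in> removed N \<and> (c, v) \<in> E\<^sup>*)) \<or>
   ((u, v) \<in> E \<and> in_clade N u \<and> in_clade N v)"
proof -
  have "(\<exists>c. (u, c) \<in> E \<and> Inl c \<in> removed N \<and> (Inl c, Inl v) \<in> (star_arcs N)\<^sup>*) \<longleftrightarrow>
        (\<exists>c. (u, c) \<in> E \<and> Inl c \<in> removed N \<and> (c, v) \<in> E\<^sup>*)" if "\<not> in_clade N v"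
    using rtrancl_star_arcs_Inl_Inl Inl_removed_iff that by blast
  then have "(u \<in> V \<and> \<not> in_clade N u \<and> Inl u \<notin> removed N \<and> Inl v \<in> star_leaves N \<and>
      (\<exists>c. (u, c) \<in> E \<and> Inl c \<in> removed N \<and> (Inl c, Inl v) \<in> (star_arcs N)\<^sup>*)) \<longleftrightarrow>
    (u \<in> V \<and> \<not> in_clade N u \<and> Inl u \<notin> removed N \<and> v \<in> leaves N \<and> \<not> in_clade N v \<and>
      (\<exists>c. (u, c) \<in> E \<and> Inl c \<in> removed N \<and> (c, v) \<in> E\<^sup>*))"
    using star_leaves_Inl by blast
  then show ?thesis
    unfolding step3_arcs_iff[of "Inl u" "Inl v"] step2_arc_from_Inl_iff
    using star_arcs_Inl_Inl by blast
qed

lemma step3_arcs_Inl_Inr: "(Inl u, Inr r) \<in> step3_arcs N \<longleftrightarrow>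
   ((u, r) \<in> E \<and> max_clade_root N r \<and> Inl u \<notin> removed N) \<or>
   (u \<in> V \<and> \<not> in_clade N u \<and> Inl u \<notin> removed N \<and> max_clade_root N r \<and>
     (\<exists>c. (u, c) \<in> E \<and> Inl c \<in> removed N \<and> (c, r) \<in> E\<^sup>*))"
proof -
  have "(\<exists>c. (u, c) \<in> E \<and> Inl c \<in> removed N \<and> (Inl c, Inr r) \<in> (star_arcs N)\<^sup>*) \<longleftrightarrow>
        (\<exists>c. (u, c) \<in> E \<and> Inl c \<in> removed N \<and> (c, r) \<in> E\<^sup>* \<and> max_clade_root N r)"
    using rtrancl_star_arcs_Inl_Inr Inl_removed_iff by blast
  then have "(u \<in> V \<and> \<not> in_clade N u \<and> Inl u \<notin> removed N \<and> Inr r \<in> star_leaves N \<and>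
      (\<exists>c. (u, c) \<in> E \<and> Inl c \<in> removed N \<and> (Inl c, Inr r) \<in> (star_arcs N)\<^sup>*)) \<longleftrightarrow>
    (u \<in> V \<and> \<not> in_clade N u \<and> Inl u \<notin> removed N \<and> max_clade_root N r \<and>
      (\<exists>c. (u, c) \<in> E \<and> Inl c \<in> removed N \<and> (c, r) \<in> E\<^sup>*))"
    using star_leaves_Inr by blast
  then show ?thesis
    unfolding step3_arcs_iff[of "Inl u" "Inr r"] step2_arc_from_Inl_iff
    using star_arcs_Inl_Inr Inr_not_removed by blast
qed

lemma step3_arcs_Inr_Inl: "(Inr r, Inl v) \<in> step3_arcs N \<longleftrightarrow> v = r \<and> max_clade_root N r"
  unfolding step3_arcs_iff[of "Inr r" "Inl v"] using star_arcs_Inr by blast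

lemma step3_arcs_Inr_Inr: "(Inr r, Inr r') \<notin> step3_arcs N"
  unfolding step3_arcs_iff[of "Inr r" "Inr r'"] using star_arcs_Inr by blast

lemma step3_arcs_subset: "step3_arcs N \<subseteq> step3_nodes N \<times> step3_nodes N"
proof clarify
  fix x y assume xy: "(x, y) \<in> step3_arcs N"
  show "x \<in> step3_nodes N \<and> y \<in> step3_nodes N"
  proof (cases x; cases y)
    fix u v assume uv: "x = Inl u" "y = Inl v"
    from xy have "(Inl u, Inl v) \<in> step3_arcs N" unfolding uv .
    then show ?thesis using arc_tail arc_head rtrancl_node Inl_removed_iff
      unfolding uv step3_arcs_Inl_Inl step3_nodes_Inl by blast
  next
    fix u r assume ur: "x = Inl u" "y = Inr r"
    from xy have "(Inl u, Inr r) \<in> step3_arcs N" unfolding ur .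
    then show ?thesis using arc_tail
      unfolding ur step3_arcs_Inl_Inr step3_nodes_Inl step3_nodes_Inr by blast
  next
    fix r v assume rv: "x = Inr r" "y = Inl v"
    from xy have "(Inr r, Inl v) \<in> step3_arcs N" unfolding rv .
    then show ?thesis using max_clade_root_node max_clade_root_in_clade Inl_removed_iff
      unfolding rv step3_arcs_Inr_Inl step3_nodes_Inl step3_nodes_Inr by blast
  qed (use xy step3_arcs_Inr_Inr in simp)
qed

lemma wf_converse_step3_arcs: "wf ((step3_arcs N)\<inverse>)"
proof (rule wf_subset[OF wf_measure])
  define rank where "rank x = (case x of Inl v \<Rightarrow> 2 * nl_size (\<ll> v) | Inr r \<Rightarrow> 2 * nl_size (\<ll> r) + 1)"
    for x :: "'v + 'v"
  have "rank y < rank x" if xy: "(x, y) \<in> step3_arcs N" for x y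
  proof (cases x; cases y)
    fix u v assume uv: "x = Inl u" "y = Inl v"
    from xy have "(Inl u, Inl v) \<in> step3_arcs N" unfolding uv .
    then have "nl_size (\<ll> v) < nl_size (\<ll> u)"
      unfolding step3_arcs_Inl_Inl using nl_size_arc_less nl_size_rtrancl_le le_less_trans by blast
    then show ?thesis unfolding uv rank_def by simp
  next
    fix u r assume ur: "x = Inl u" "y = Inr r"
    from xy have "(Inl u, Inr r) \<in> step3_arcs N" unfolding ur .
    then have "nl_size (\<ll> r) < nl_size (\<ll> u)"
      unfolding step3_arcs_Inl_Inr using nl_size_arc_less nl_size_rtrancl_le le_less_trans by blast
    then show ?thesis unfolding ur rank_def by simp
  next
    fix r v assume "x = Inr r" "y = Inl v"
    with xy show ?thesis using step3_arcs_Inr_Inl unfolding rank_def by simp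
  qed (use xy step3_arcs_Inr_Inr in simp)
  then show "(step3_arcs N)\<inverse> \<subseteq> measure rank" by auto
qed

lemma reach_star_leaf: "c \<in> V \<Longrightarrow> \<not> in_clade N c \<Longrightarrow>
  (\<exists>h. h \<in> leaves N \<and> \<not> in_clade N h \<and> (c, h) \<in> E\<^sup>*) \<or> (\<exists>r. max_clade_root N r \<and> (c, r) \<in> E\<^sup>*)"
proof (induction c rule: wf_induct_rule[OF wf_converse_arcs])
  case (1 c)
  show ?case
  proof (cases "c \<in> leaves N")
    case False
    then obtain c' where c': "(c, c') \<in> E" using leaves_iff 1(2) by blast
    show ?thesis
    proof (cases "in_clade N c'")
      case True
      then show ?thesis using in_clade_child_max_clade_root c' 1(3) by blast
    next
      case False
      then have "(\<exists>h. h \<in> leaves N \<and> \<not> in_clade N h \<and> (c', h) \<in> E\<^sup>*) \<or>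
          (\<exists>r. max_clade_root N r \<and> (c', r) \<in> E\<^sup>*)"
        using 1(1) c' arc_head by blast
      then show ?thesis using c' by (meson converse_rtrancl_into_rtrancl)
    qed
  qed (use 1 in blast)
qed

lemma step3_arcs_out_of_Inl:
  assumes v: "Inl v \<in> step3_nodes N" "v \<notin> leaves N"
  shows "\<exists>y. (Inl v, y) \<in> step3_arcs N"
proof -
  have vV: "v \<in> V" and nr: "Inl v \<notin> removed N" using v step3_nodes_Inl by auto
  obtain c where c: "(v, c) \<in> E" using leaves_iff vV v(2) by blast
  show ?thesis
  proof (cases "in_clade N v")
    case True
    then show ?thesis using in_clade_arc c step3_arcs_Inl_Inl by blast
  next
    case nv: False
    consider "in_clade N c" | "\<not> in_clade N c" "Inl c \<notin> removed N"
      | "\<not> in_clade N c" "Inl c \<in> removed N" by blast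
    then show ?thesis
    proof cases
      case 1
      then show ?thesis using in_clade_child_max_clade_root c nv nr step3_arcs_Inl_Inr by blast
    next
      case 2
      then show ?thesis using c nv nr step3_arcs_Inl_Inl by blast
    next
      case 3
      from reach_star_leaf[OF arc_head[OF c] 3(1)] show ?thesis
        using c nv nr vV 3(2) step3_arcs_Inl_Inl step3_arcs_Inl_Inr by blast
    qed
  qed
qed

end

section \<open>Removed nodes in terms of nested labels\<close>

definition convergent_nl :: "'s nlabel multiset \<Rightarrow> 's nlabel \<Rightarrow> bool" where
  "convergent_nl UU K \<longleftrightarrow> 2 \<le> size (filter_mset (\<lambda>K'. nl_taxa K' = nl_taxa K) UU)"

definition removed0_nl :: "'s nlabel multiset \<Rightarrow> 's nlabel \<Rightarrow> bool" where
  "removed0_nl UU K \<longleftrightarrow> K \<notin> range NLeaf \<and> \<not> in_clade_nl UU K \<and> convergent_nl UU K"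

definition removed_nl :: "'s nlabel multiset \<Rightarrow> 's nlabel \<Rightarrow> bool" where
  "removed_nl UU K \<longleftrightarrow> K \<notin> range NLeaf \<and> \<not> in_clade_nl UU K \<and>
     (\<exists>K' \<in># UU. removed0_nl UU K' \<and> K \<in> nl_subterms K')"

context phylo_network
begin

lemma not_leaf_iff_nl: "v \<in> V \<Longrightarrow> \<ll> v \<notin> range NLeaf \<longleftrightarrow> v \<notin> leaves N"
  by (cases "v \<in> leaves N") (auto simp: nested_label_leaf nested_label_node)

lemma exists_convergent_iff_nl:
  assumes v: "v \<in> V"
  shows "(\<exists>w\<in>V. w \<noteq> v \<and> convergent N v w) \<longleftrightarrow> convergent_nl U (\<ll> v)"
proof -
  let ?A = "{w \<in> V. nl_taxa (\<ll> w) = nl_taxa (\<ll> v)}"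
  have "size (filter_mset (\<lambda>K. nl_taxa K = nl_taxa (\<ll> v)) U) = card ?A"
    unfolding Upsilon_def using finite_nodes by (simp add: filter_mset_image_mset)
  then have "convergent_nl U (\<ll> v) \<longleftrightarrow> (\<exists>w\<in>?A. w \<noteq> v)"
    unfolding convergent_nl_def using two_le_card_iff[of ?A v] finite_nodes v by simp
  then show ?thesis unfolding convergent_def using cluster_eq_nl_taxa v by auto
qed

lemma Inl_removed0_iff_nl: "Inl d \<in> removed0 N \<longleftrightarrow> d \<in> V \<and> removed0_nl U (\<ll> d)"
  unfolding removed0_iff removed0_nl_def
  using not_leaf_iff_nl exists_convergent_iff_nl in_clade_iff_nl by auto

lemma Inl_removed_iff_nl: "Inl v \<in> removed N \<longleftrightarrow> v \<in> V \<and> removed_nl U (\<ll> v)"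
proof
  assume v: "Inl v \<in> removed N"
  then obtain d where d: "Inl d \<in> removed0 N" "(d, v) \<in> E\<^sup>*" using Inl_removed_iff by blast
  have "d \<in> V" "removed0_nl U (\<ll> d)" using d(1) Inl_removed0_iff_nl by auto
  moreover have "\<ll> v \<in> nl_subterms (\<ll> d)" using rtrancl_nl_subterms d(2) by simp
  moreover have "v \<in> V" "\<ll> v \<notin> range NLeaf" "\<not> in_clade_nl U (\<ll> v)"
    using v Inl_removed_iff not_leaf_iff_nl in_clade_iff_nl by auto
  ultimately show "v \<in> V \<and> removed_nl U (\<ll> v)"
    unfolding removed_nl_def using mem_Upsilon_iff by blast
next
  assume a: "v \<in> V \<and> removed_nl U (\<ll> v)"
  then have v: "v \<in> V" "v \<notin> leaves N" "\<not> in_clade N v"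
    using not_leaf_iff_nl in_clade_iff_nl unfolding removed_nl_def by auto
  from a obtain K where K: "K \<in># U" "removed0_nl U K" "\<ll> v \<in> nl_subterms K"
    unfolding removed_nl_def by blast
  then obtain d where d: "d \<in> V" "\<ll> d = K" using mem_Upsilon_iff by blast
  then have rd: "Inl d \<in> removed0 N" using Inl_removed0_iff_nl K(2) by simp
  obtain w where w: "(d, w) \<in> E\<^sup>*" "\<ll> w = \<ll> v" using nl_subterms_rtrancl d K(3) by blast
  show "Inl v \<in> removed N"
  proof (cases "w = v")
    case True
    then show ?thesis using Inl_removed_iff v rd w(1) by blast
  next
    case False
    have "w \<in> V" using rtrancl_node w(1) d(1) by blast
    then have "Inl v \<in> removed0 N"
      using False v w(2) cluster_eq_nl_taxa unfolding removed0_iff convergent_def by auto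
    then show ?thesis unfolding removed_def by blast
  qed
qed

lemma unique_nl_if_not_removed:
  assumes v: "v \<in> V" "Inl v \<notin> removed N"
  shows "unique_nl v"
proof -
  consider "in_clade N v" | "v \<in> leaves N" | "\<not> in_clade N v" "v \<notin> leaves N" by blast
  then show ?thesis
  proof cases
    case 3
    then have "Inl v \<notin> removed0 N" using v unfolding removed_def by blast
    then have "\<not> (\<exists>w\<in>V. w \<noteq> v \<and> convergent N v w)" using removed0_iff v 3 by blast
    then show ?thesis unfolding unique_nl_def convergent_def using cluster_eq_nl_taxa v(1) by metis
  qed (use in_clade_unique_nl leaf_unique_nl in blast)+
qed

lemma arc_iff_nl:
  assumes v: "unique_nl v"
  shows "(u, v) \<in> E \<longleftrightarrow> u \<in> V \<and> \<ll> v \<in># nl_children (\<ll> u)"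
proof
  assume "u \<in> V \<and> \<ll> v \<in># nl_children (\<ll> u)"
  then obtain c where c: "(u, c) \<in> E" "\<ll> c = \<ll> v" using nl_children_arc by blast
  then have "c = v" using v arc_head unfolding unique_nl_def by metis
  then show "(u, v) \<in> E" using c by simp
qed (use arc_tail arc_nl_children in blast)

lemma rtrancl_iff_nl:
  assumes v: "unique_nl v" and u: "u \<in> V"
  shows "(u, v) \<in> E\<^sup>* \<longleftrightarrow> \<ll> v \<in> nl_subterms (\<ll> u)"
proof
  assume "\<ll> v \<in> nl_subterms (\<ll> u)"
  then obtain w where w: "(u, w) \<in> E\<^sup>*" "\<ll> w = \<ll> v" using nl_subterms_rtrancl u by blast
  then have "w = v" using v u rtrancl_node unfolding unique_nl_def by metis
  then show "(u, v) \<in> E\<^sup>*" using w by simp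
qed (rule rtrancl_nl_subterms)

lemma removed_child_iff_nl:
  assumes "unique_nl v" "u \<in> V"
  shows "(\<exists>c. (u, c) \<in> E \<and> Inl c \<in> removed N \<and> (c, v) \<in> E\<^sup>*) \<longleftrightarrow>
    (\<exists>K. K \<in># nl_children (\<ll> u) \<and> removed_nl U K \<and> \<ll> v \<in> nl_subterms K)"
proof
  assume "\<exists>c. (u, c) \<in> E \<and> Inl c \<in> removed N \<and> (c, v) \<in> E\<^sup>*"
  then show "\<exists>K. K \<in># nl_children (\<ll> u) \<and> removed_nl U K \<and> \<ll> v \<in> nl_subterms K"
    using arc_nl_children Inl_removed_iff_nl rtrancl_nl_subterms by blast
next
  assume "\<exists>K. K \<in># nl_children (\<ll> u) \<and> removed_nl U K \<and> \<ll> v \<in> nl_subterms K"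
  then obtain K where K: "K \<in># nl_children (\<ll> u)" "removed_nl U K" "\<ll> v \<in> nl_subterms K" by blast
  then obtain c where c: "(u, c) \<in> E" "\<ll> c = K" using nl_children_arc assms(2) by blast
  then have "Inl c \<in> removed N" "(c, v) \<in> E\<^sup>*"
    using Inl_removed_iff_nl rtrancl_iff_nl[OF assms(1)] arc_head K(2,3) by auto
  then show "\<exists>c. (u, c) \<in> E \<and> Inl c \<in> removed N \<and> (c, v) \<in> E\<^sup>*" using c(1) by blast
qed

end

section \<open>The graph after step (3) in terms of nested labels\<close>

text \<open>The tag tells the symbolic leaf \<open>h_T\<close> (\<open>True\<close>) apart from the root of the clade \<open>T\<close>
  appended to it in step (3), which carries the same nested label.\<close>

definition tagged_nl :: "('v, 's) net \<Rightarrow> 'v + 'v \<Rightarrow> bool \<times> 's nlabel" where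
  "tagged_nl N x = (case x of Inl v \<Rightarrow> (False, nested_label N v) | Inr r \<Rightarrow> (True, nested_label N r))"

definition step3_node_nls :: "'s nlabel multiset \<Rightarrow> (bool \<times> 's nlabel) set" where
  "step3_node_nls UU =
     {(False, A) | A. A \<in># UU \<and> \<not> removed_nl UU A} \<union> {(True, R) | R. R \<in># UU \<and> max_clade_root_nl UU R}"

text \<open>The disjuncts mirror the definition of \<open>step3_arcs\<close>: arcs of N* kept in step (1),
  arcs added in step (2), arcs inside appended clades, and arcs \<open>(h\<^sub>T, r\<^sub>T)\<close> from step (3).\<close>

fun step3_arc_nl :: "'s nlabel multiset \<Rightarrow> bool \<times> 's nlabel \<Rightarrow> bool \<times> 's nlabel \<Rightarrow> bool" where
  "step3_arc_nl UU (False, A) (False, B) \<longleftrightarrow>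
     (B \<in># nl_children A \<and> \<not> in_clade_nl UU A \<and> \<not> in_clade_nl UU B \<and>
        \<not> removed_nl UU A \<and> \<not> removed_nl UU B) \<or>
     (\<not> in_clade_nl UU A \<and> \<not> removed_nl UU A \<and> B \<in> range NLeaf \<and> \<not> in_clade_nl UU B \<and>
        (\<exists>K. K \<in># nl_children A \<and> removed_nl UU K \<and> B \<in> nl_subterms K)) \<or>
     (B \<in># nl_children A \<and> in_clade_nl UU A \<and> in_clade_nl UU B)"
| "step3_arc_nl UU (False, A) (True, R) \<longleftrightarrow>
     (R \<in># nl_children A \<and> max_clade_root_nl UU R \<and> \<not> removed_nl UU A) \<or>
     (\<not> in_clade_nl UU A \<and> \<not> removed_nl UU A \<and> max_clade_root_nl UU R \<and>
        (\<exists>K. K \<in># nl_children A \<and> removed_nl UU K \<and> R \<in> nl_subterms K))"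
| "step3_arc_nl UU (True, R) (False, B) \<longleftrightarrow> B = R \<and> max_clade_root_nl UU R"
| "step3_arc_nl UU (True, R) (True, R') \<longleftrightarrow> False"

fun leaf_taxon :: "'s nlabel \<Rightarrow> 's" where
  "leaf_taxon (NLeaf s) = s"
| "leaf_taxon (NNode M) = undefined"

definition step3_net :: "('v, 's) net \<Rightarrow> ('v + 'v, 's) net" where
  "step3_net N = \<lparr>nodes = step3_nodes N, arcs = step3_arcs N, label = sum_label N\<rparr>"

definition has_convergent_pair :: "('v, 's) net \<Rightarrow> bool" where
  "has_convergent_pair N \<longleftrightarrow> (\<exists>u \<in> nodes N. \<exists>v \<in> nodes N. u \<noteq> v \<and> convergent N u v)"

lemma reduced_if_convergent_pair: "has_convergent_pair N \<Longrightarrow> reduced N = suppress (step3_net N)"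
  unfolding reduced_def has_convergent_pair_def suppress_def step3_net_def elementary_def
    elementary3_def parents_def children_def by simp

lemma reduced_if_no_convergent_pair: "\<not> has_convergent_pair N \<Longrightarrow>
  reduced N = \<lparr>nodes = Inl ` nodes N, arcs = map_prod Inl Inl ` arcs N, label = sum_label N\<rparr>"
  unfolding reduced_def has_convergent_pair_def by simp

context phylo_network
begin

lemma tagged_nl_Inl [simp]: "tagged_nl N (Inl v) = (False, \<ll> v)"
  and tagged_nl_Inr [simp]: "tagged_nl N (Inr r) = (True, \<ll> r)"
  unfolding tagged_nl_def by simp_all

lemma tagged_nl_step3_nodes: "tagged_nl N ` step3_nodes N = step3_node_nls U"
proof
  show "tagged_nl N ` step3_nodes N \<subseteq> step3_node_nls U"
  proof (rule image_subsetI)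
    fix x assume x: "x \<in> step3_nodes N"
    show "tagged_nl N x \<in> step3_node_nls U"
    proof (cases x)
      case (Inl v)
      then show ?thesis using x step3_nodes_Inl Inl_removed_iff_nl mem_Upsilon_iff
        unfolding step3_node_nls_def by auto
    next
      case (Inr r)
      then show ?thesis using x step3_nodes_Inr max_clade_root_iff_nl mem_Upsilon_iff
        unfolding step3_node_nls_def by auto
    qed
  qed
  show "step3_node_nls U \<subseteq> tagged_nl N ` step3_nodes N"
  proof
    fix z assume "z \<in> step3_node_nls U"
    then consider A where "z = (False, A)" "A \<in># U" "\<not> removed_nl U A"
      | R where "z = (True, R)" "R \<in># U" "max_clade_root_nl U R"
      unfolding step3_node_nls_def by blast
    then show "z \<in> tagged_nl N ` step3_nodes N"
    proof cases
      case 1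
      then obtain v where "v \<in> V" "\<ll> v = A" using mem_Upsilon_iff by blast
      then have "Inl v \<in> step3_nodes N" "tagged_nl N (Inl v) = z"
        using 1 step3_nodes_Inl Inl_removed_iff_nl by auto
      then show ?thesis by (metis image_eqI)
    next
      case 2
      then obtain r where "r \<in> V" "\<ll> r = R" using mem_Upsilon_iff by blast
      then have "Inr r \<in> step3_nodes N" "tagged_nl N (Inr r) = z"
        using 2 step3_nodes_Inr max_clade_root_iff_nl by auto
      then show ?thesis by (metis image_eqI)
    qed
  qed
qed

lemma step3_nodes_unique_nl:
  "Inl v \<in> step3_nodes N \<Longrightarrow> unique_nl v"
  "Inr r \<in> step3_nodes N \<Longrightarrow> unique_nl r"
  using step3_nodes_Inl unique_nl_if_not_removed step3_nodes_Inr max_clade_root_in_clade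
    in_clade_unique_nl by blast+

lemma inj_on_tagged_nl_step3_nodes: "inj_on (tagged_nl N) (step3_nodes N)"
proof
  fix x y assume xy: "x \<in> step3_nodes N" "y \<in> step3_nodes N" "tagged_nl N x = tagged_nl N y"
  show "x = y"
  proof (cases x; cases y)
    fix u v assume "x = Inl u" "y = Inl v"
    then show ?thesis using xy step3_nodes_unique_nl(1) unfolding unique_nl_def by auto
  next
    fix u v assume "x = Inr u" "y = Inr v"
    then show ?thesis using xy step3_nodes_unique_nl(2) unfolding unique_nl_def by auto
  qed (use xy in auto)
qed

lemma step3_arcs_iff_nl:
  assumes x: "x \<in> step3_nodes N" and y: "y \<in> step3_nodes N"
  shows "(x, y) \<in> step3_arcs N \<longleftrightarrow> step3_arc_nl U (tagged_nl N x) (tagged_nl N y)"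
proof (cases x; cases y)
  fix u v assume xy: "x = Inl u" "y = Inl v"
  have u: "u \<in> V" "Inl u \<notin> removed N" and v: "v \<in> V" "Inl v \<notin> removed N" "unique_nl v"
    using x y xy step3_nodes_Inl step3_nodes_unique_nl by auto
  have "v \<in> leaves N \<longleftrightarrow> \<ll> v \<in> range NLeaf" using not_leaf_iff_nl v(1) by blast
  then show ?thesis
    unfolding xy tagged_nl_Inl step3_arc_nl.simps step3_arcs_Inl_Inl
      arc_iff_nl[OF v(3)] removed_child_iff_nl[OF v(3) u(1)]
    using u v in_clade_iff_nl Inl_removed_iff_nl by auto
next
  fix u r assume xy: "x = Inl u" "y = Inr r"
  have u: "u \<in> V" "Inl u \<notin> removed N" and r: "max_clade_root N r" "unique_nl r"
    using x y xy step3_nodes_Inl step3_nodes_Inr step3_nodes_unique_nl by auto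
  then show ?thesis
    unfolding xy tagged_nl_Inl tagged_nl_Inr step3_arc_nl.simps step3_arcs_Inl_Inr
      arc_iff_nl[OF r(2)] removed_child_iff_nl[OF r(2) u(1)]
    using in_clade_iff_nl Inl_removed_iff_nl max_clade_root_iff_nl by auto
next
  fix r v assume xy: "x = Inr r" "y = Inl v"
  have r: "max_clade_root N r" "unique_nl r" and v: "v \<in> V"
    using x y xy step3_nodes_Inl step3_nodes_Inr step3_nodes_unique_nl by auto
  then have "v = r \<longleftrightarrow> \<ll> v = \<ll> r" unfolding unique_nl_def by metis
  then show ?thesis
    unfolding xy tagged_nl_Inl tagged_nl_Inr step3_arc_nl.simps step3_arcs_Inr_Inl
    using r max_clade_root_iff_nl by auto
qed (simp add: step3_arcs_Inr_Inr)

lemma step3_net_leaf_label: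
  assumes x: "x \<in> leaves (step3_net N)"
  shows "label (step3_net N) x = leaf_taxon (snd (tagged_nl N x))"
proof -
  have x3: "x \<in> step3_nodes N" and out: "\<forall>y. (x, y) \<notin> step3_arcs N"
    using x unfolding leaves_def children_def step3_net_def by auto
  obtain v where v: "x = Inl v"
    using out step3_arcs_Inr_Inl step3_nodes_Inr x3 by (cases x) auto
  then have "v \<in> leaves N" using step3_arcs_out_of_Inl x3 out by blast
  then show ?thesis using v by (simp add: step3_net_def sum_label_def nested_label_leaf)
qed

lemma has_convergent_pair_iff_nl: "has_convergent_pair N \<longleftrightarrow> (\<exists>K \<in># U. convergent_nl U K)"
  unfolding has_convergent_pair_def using exists_convergent_iff_nl mem_Upsilon_iff by metis

lemma unique_nl_if_no_convergent_pair: "\<not> has_convergent_pair N \<Longrightarrow> v \<in> V \<Longrightarrow> unique_nl v"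
  unfolding unique_nl_def has_convergent_pair_def convergent_def using cluster_eq_nl_taxa by metis

lemma reduced_labelling_if_no_convergent_pair:
  assumes no_pair: "\<not> has_convergent_pair N"
  shows "arcs (reduced N) \<subseteq> nodes (reduced N) \<times> nodes (reduced N)"
    and "inj_on (tagged_nl N) (nodes (reduced N))"
    and "tagged_nl N ` nodes (reduced N) = {(False, A) | A. A \<in># U}"
    and "\<And>x y. x \<in> nodes (reduced N) \<Longrightarrow> y \<in> nodes (reduced N) \<Longrightarrow>
      (x, y) \<in> arcs (reduced N) \<longleftrightarrow> snd (tagged_nl N y) \<in># nl_children (snd (tagged_nl N x))"
    and "\<And>x. x \<in> leaves (reduced N) \<Longrightarrow> label (reduced N) x = leaf_taxon (snd (tagged_nl N x))"
proof -
  note reduced = reduced_if_no_convergent_pair[OF no_pair]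
  note unique = unique_nl_if_no_convergent_pair[OF no_pair]
  show "arcs (reduced N) \<subseteq> nodes (reduced N) \<times> nodes (reduced N)"
    unfolding reduced using arcs_subset by auto
  show "inj_on (tagged_nl N) (nodes (reduced N))"
    unfolding reduced using unique by (auto simp: inj_on_def unique_nl_def)
  show "tagged_nl N ` nodes (reduced N) = {(False, A) | A. A \<in># U}"
    unfolding reduced using mem_Upsilon_iff by (auto simp: image_iff)
  show "(x, y) \<in> arcs (reduced N) \<longleftrightarrow> snd (tagged_nl N y) \<in># nl_children (snd (tagged_nl N x))"
    if "x \<in> nodes (reduced N)" "y \<in> nodes (reduced N)" for x y
    using that arc_iff_nl unique unfolding reduced by auto
  show "label (reduced N) x = leaf_taxon (snd (tagged_nl N x))" if x: "x \<in> leaves (reduced N)" for x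
  proof -
    obtain v where v: "x = Inl v" "v \<in> V" "\<forall>w. (Inl v, w) \<notin> map_prod Inl Inl ` E"
      using x unfolding reduced leaves_def children_def by auto
    then have "v \<in> leaves N" unfolding leaves_iff by force
    then show ?thesis unfolding reduced v(1) by (simp add: sum_label_def nested_label_leaf)
  qed
qed

end

lemma Upsilon_eq_if_mdist_eq_0:
  assumes "mdist N1 N2 = 0"
  shows "Upsilon N1 = Upsilon N2"
proof -
  have "Upsilon N1 - Upsilon N2 = {#}" "Upsilon N2 - Upsilon N1 = {#}"
    using assms unfolding mdist_def by (simp_all add: add_nonneg_eq_0_iff)
  then show ?thesis by (simp add: Diff_eq_empty_iff_mset subset_mset.antisym)
qed

lemma net_iso_step3_net:
  assumes "phylo_net S N1" "phylo_net S N2" and U: "Upsilon N1 = Upsilon N2"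
  shows "net_iso (step3_net N1) (step3_net N2)"
proof -
  interpret N1: phylo_network S N1 by (rule phylo_network.intro) (rule assms(1))
  interpret N2: phylo_network S N2 by (rule phylo_network.intro) (rule assms(2))
  show ?thesis
  proof (rule net_iso_by_labelling[where \<phi> = "tagged_nl N1" and \<psi> = "tagged_nl N2"
        and P = "step3_arc_nl (Upsilon N1)" and taxon = "leaf_taxon \<circ> snd"])
    show "tagged_nl N1 ` nodes (step3_net N1) = tagged_nl N2 ` nodes (step3_net N2)"
      using N1.tagged_nl_step3_nodes N2.tagged_nl_step3_nodes U by (simp add: step3_net_def)
  qed (use N1.step3_arcs_subset N2.step3_arcs_subset
        N1.inj_on_tagged_nl_step3_nodes N2.inj_on_tagged_nl_step3_nodes
        N1.step3_arcs_iff_nl N2.step3_arcs_iff_nl N1.step3_net_leaf_label N2.step3_net_leaf_label U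
      in \<open>simp_all add: step3_net_def\<close>)
qed

theorem theorem2:
  fixes S :: "'s set" and N1 :: "('v, 's) net" and N2 :: "('w, 's) net"
  assumes "phylo_net S N1" and "phylo_net S N2"
    and "mdist N1 N2 = 0"
  shows "net_iso (reduced N1) (reduced N2)"
proof -
  interpret N1: phylo_network S N1 by (rule phylo_network.intro) (rule assms(1))
  interpret N2: phylo_network S N2 by (rule phylo_network.intro) (rule assms(2))
  have U: "Upsilon N1 = Upsilon N2" using assms(3) by (rule Upsilon_eq_if_mdist_eq_0)
  then have pair: "has_convergent_pair N2 \<longleftrightarrow> has_convergent_pair N1"
    using N1.has_convergent_pair_iff_nl N2.has_convergent_pair_iff_nl by simp
  show ?thesis
  proof (cases "has_convergent_pair N1")
    case True
    have "net_iso (step3_net N1) (step3_net N2)" using assms(1,2) U by (rule net_iso_step3_net)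
    then have "net_iso (suppress (step3_net N1)) (suppress (step3_net N2))"
      using N1.step3_arcs_subset N2.step3_arcs_subset N1.wf_converse_step3_arcs
      by (intro net_iso_suppress) (simp_all add: step3_net_def)
    then show ?thesis
      using True pair reduced_if_convergent_pair[of N1] reduced_if_convergent_pair[of N2] by simp
  next
    case False
    then show ?thesis
      using N1.reduced_labelling_if_no_convergent_pair N2.reduced_labelling_if_no_convergent_pair
        pair U by (intro net_iso_by_labelling[where taxon = "leaf_taxon \<circ> snd"]) auto
  qed
qed

end
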